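(* Let $X$ be a metric space with exactly $n$ points, let $G$ be a finite group acting by isometries on the Euclidean space $E^m$, and suppose that $X$ can be isometrically embedded into the metric quotient $E^m/G$. Then for every $0 \le \alpha \le 1$ the snowflake space $X^{\alpha}$ can be isometrically embedded into the metric space $Q(n,G)$.
   Context: $E^m$ denotes $m$-dimensional Euclidean space. For a finite group $G$ acting by isometries on a Euclidean (affine) space $V$, the metric quotient $V/G$ is the set of $G$-orbits with distance $d(Gx, Gy) = \min_{g \in G} |x - g y|$. For a metric space $(X,d)$ and $0 \le \alpha \le 1$, the snowflake $X^{\alpha}$ is $X$ with metric $d(x,y)^{\alpha}$ (for $\alpha = 0$ this means distance $1$ between distinct points and $0$ between equal points). For a finite group $G$, $\mathbb{R}[G]$ denotes the space of all functions $f: G \to \mathbb{R}$ with its standard Euclidean structure (the functions $\delta_g$, $g\in G$, form an orthonormal basis). Let $L_1(n,G) = \{(f_1,\dots,f_n) \in \mathbb{R}[G]^n : \sum_{i=1}^n \sum_{g \in G} f_i(g) = 1\}$, an affine hyperplane of the Euclidean space $\mathbb{R}[G]^n$. The group $G$ acts on $L_1(n,G)$ by the regular action on each coordinate, $(h\cdot(f_1,\dots,f_n)) = (f_1(h^{-1}\,\cdot),\dots,f_n(h^{-1}\,\cdot))$; $Q(n,G)$ denotes the metric quotient $L_1(n,G)/G$. *)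

theory Defs
  imports "HOL-Analysis.Analysis" "HOL-Algebra.Group_Action"
begin

text \<open>Metric of the quotient V/G, expressed on representatives:
  d(Gx, Gy) = min over g in G of |x - g y|.\<close>
definition quot_dist :: "('g, 'b) monoid_scheme \<Rightarrow> ('g \<Rightarrow> 'v::metric_space \<Rightarrow> 'v) \<Rightarrow> 'v \<Rightarrow> 'v \<Rightarrow> real"
  where "quot_dist G \<phi> x y = Min ((\<lambda>g. dist x (\<phi> g y)) ` carrier G)"

text \<open>R[G]^n represented as functions nat => 'g => real, supported on {..<n} x carrier G.
  L_1(n,G) is the affine hyperplane of total sum 1.\<close>
definition L1 :: "nat \<Rightarrow> ('g, 'b) monoid_scheme \<Rightarrow> (nat \<Rightarrow> 'g \<Rightarrow> real) set"
  where "L1 n G = {v. (\<forall>i g. (n \<le> i \<or> g \<notin> carrier G) \<longrightarrow> v i g = 0) \<and>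
                     (\<Sum>i<n. \<Sum>g\<in>carrier G. v i g) = 1}"

definition RG_dist :: "nat \<Rightarrow> ('g, 'b) monoid_scheme \<Rightarrow> (nat \<Rightarrow> 'g \<Rightarrow> real) \<Rightarrow> (nat \<Rightarrow> 'g \<Rightarrow> real) \<Rightarrow> real"
  where "RG_dist n G v w = sqrt (\<Sum>i<n. \<Sum>g\<in>carrier G. (v i g - w i g)\<^sup>2)"

definition reg_act :: "('g, 'b) monoid_scheme \<Rightarrow> 'g \<Rightarrow> (nat \<Rightarrow> 'g \<Rightarrow> real) \<Rightarrow> (nat \<Rightarrow> 'g \<Rightarrow> real)"
  where "reg_act G h v = (\<lambda>i g. if g \<in> carrier G then v i (inv\<^bsub>G\<^esub> h \<otimes>\<^bsub>G\<^esub> g) else 0)"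

text \<open>Metric of Q(n,G) = L_1(n,G)/G, on representatives.\<close>
definition Q_dist :: "nat \<Rightarrow> ('g, 'b) monoid_scheme \<Rightarrow> (nat \<Rightarrow> 'g \<Rightarrow> real) \<Rightarrow> (nat \<Rightarrow> 'g \<Rightarrow> real) \<Rightarrow> real"
  where "Q_dist n G v w = Min ((\<lambda>h. RG_dist n G v (reg_act G h w)) ` carrier G)"

end

theory Submission
  imports Defs "HOL-Real_Asymp.Real_Asymp"
begin

text \<open>Enumerate \<open>X = {x\<^sub>0, \<dots>, x\<^sub>n\<^sub>-\<^sub>1}\<close> and let \<open>p\<close> realise \<open>d\<close> in \<open>E\<^sup>m/G\<close>. The points
  \<open>g p(x\<^sub>i)\<close>, indexed by \<open>T = {0..n-1} \<times> G\<close>, carry the kernel \<open>N = |\<cdot> - \<cdot>|\<^sup>2\<^sup>\<alpha>\<close>, which is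
  conditionally negative definite by Schoenberg's theorem: \<open>|z|\<^sup>2\<^sup>\<alpha>\<close> is a limit of constants
  minus nonnegative combinations of Gaussians, and Gaussian kernels are positive definite.
  Double centering turns \<open>N\<close> into a positive semidefinite matrix \<open>M\<close> with
  \<open>M\<^sub>s\<^sub>s + M\<^sub>t\<^sub>t - 2 M\<^sub>s\<^sub>t = N\<^sub>s\<^sub>t\<close>, so the columns of its positive square root \<open>R\<close> are points
  of \<open>\<real>\<^sup>T = \<real>[G]\<^sup>n\<close> whose squared distances are \<open>N\<close>. Left translation by \<open>h \<in> G\<close> is a
  symmetry of \<open>N\<close>, hence of \<open>R\<close>, so the regular action of \<open>h\<close> moves the column of \<open>(i, 1)\<close>
  to the column of \<open>(i, h)\<close>. Shifted by a constant, the columns of the \<open>(i, 1)\<close> lie in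
  \<open>L\<^sub>1(n,G)\<close>, and minimising over \<open>h\<close> turns \<open>|p(x\<^sub>i) - h p(x\<^sub>j)|\<^sup>\<alpha>\<close> into \<open>d(x\<^sub>i, x\<^sub>j)\<^sup>\<alpha>\<close>.\<close>

section \<open>Linear algebra on functions supported on a finite index set\<close>

text \<open>A vector indexed by a finite set \<open>T\<close> is a function vanishing outside \<open>T\<close>,
  and a matrix is a kernel \<open>'a \<Rightarrow> 'a \<Rightarrow> real\<close> of which only the values on \<open>T \<times> T\<close> matter.\<close>

definition inner_on :: "'a set \<Rightarrow> ('a \<Rightarrow> real) \<Rightarrow> ('a \<Rightarrow> real) \<Rightarrow> real"
  where "inner_on T u v = (\<Sum>t\<in>T. u t * v t)"

definition matvec :: "'a set \<Rightarrow> ('a \<Rightarrow> 'a \<Rightarrow> real) \<Rightarrow> ('a \<Rightarrow> real) \<Rightarrow> 'a \<Rightarrow> real"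
  where "matvec T M v = (\<lambda>s. if s \<in> T then \<Sum>t\<in>T. M s t * v t else 0)"

definition rayleigh :: "'a set \<Rightarrow> ('a \<Rightarrow> 'a \<Rightarrow> real) \<Rightarrow> ('a \<Rightarrow> real) \<Rightarrow> real"
  where "rayleigh T M v = inner_on T (matvec T M v) v"

definition supported_on :: "'a set \<Rightarrow> ('a \<Rightarrow> real) \<Rightarrow> bool"
  where "supported_on T v \<longleftrightarrow> (\<forall>s. s \<notin> T \<longrightarrow> v s = 0)"

definition symmetric_on :: "'a set \<Rightarrow> ('a \<Rightarrow> 'a \<Rightarrow> real) \<Rightarrow> bool"
  where "symmetric_on T M \<longleftrightarrow> (\<forall>s\<in>T. \<forall>t\<in>T. M s t = M t s)"

definition orthonormal_on :: "'a set \<Rightarrow> ('a \<Rightarrow> real) set \<Rightarrow> bool"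
  where "orthonormal_on T B \<longleftrightarrow> (\<forall>u\<in>B. supported_on T u) \<and>
     (\<forall>u\<in>B. \<forall>u'\<in>B. inner_on T u u' = (if u = u' then 1 else 0))"

definition eigenvectors :: "'a set \<Rightarrow> ('a \<Rightarrow> 'a \<Rightarrow> real) \<Rightarrow> ('a \<Rightarrow> real) set \<Rightarrow> bool"
  where "eigenvectors T M B \<longleftrightarrow> (\<forall>u\<in>B. \<exists>l. matvec T M u = (\<lambda>s. l * u s))"

definition eigenbasis :: "'a set \<Rightarrow> ('a \<Rightarrow> 'a \<Rightarrow> real) \<Rightarrow> ('a \<Rightarrow> real) set \<Rightarrow> bool"
  where "eigenbasis T M B \<longleftrightarrow>
     finite B \<and> orthonormal_on T B \<and> eigenvectors T M B \<and> card B = card T"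

definition proj_on :: "'a set \<Rightarrow> ('a \<Rightarrow> real) set \<Rightarrow> ('a \<Rightarrow> real) \<Rightarrow> 'a \<Rightarrow> real"
  where "proj_on T B v = (\<lambda>s. \<Sum>u\<in>B. inner_on T v u * u s)"

definition unit_vec :: "'a \<Rightarrow> 'a \<Rightarrow> real"
  where "unit_vec t = (\<lambda>s. if s = t then 1 else 0)"

definition psd_kernel :: "'a set \<Rightarrow> ('a \<Rightarrow> 'a \<Rightarrow> real) \<Rightarrow> bool"
  where "psd_kernel T K \<longleftrightarrow> (\<forall>c. 0 \<le> (\<Sum>s\<in>T. \<Sum>t\<in>T. c s * c t * K s t))"

lemma inner_on_commute: "inner_on T u v = inner_on T v u"
  unfolding inner_on_def by (simp add: mult.commute)

lemma inner_on_self_nonneg: "0 \<le> inner_on T v v"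
  unfolding inner_on_def by (auto intro: sum_nonneg)

lemma inner_on_self_eq_0_iff:
  "finite T \<Longrightarrow> supported_on T v \<Longrightarrow> inner_on T v v = 0 \<longleftrightarrow> v = (\<lambda>_. 0)"
  unfolding inner_on_def supported_on_def
  by (subst sum_nonneg_eq_0_iff) (auto simp: fun_eq_iff)

lemma inner_on_sum_left: "inner_on T (\<lambda>s. \<Sum>u\<in>B. f u * u s) w = (\<Sum>u\<in>B. f u * inner_on T u w)"
  unfolding inner_on_def by (simp add: sum_distrib_right sum_distrib_left mult_ac sum.swap[of _ T])

lemma inner_on_diff_left: "inner_on T (\<lambda>s. a s - b s) w = inner_on T a w - inner_on T b w"
  unfolding inner_on_def by (simp add: left_diff_distrib sum_subtractf)

lemma inner_on_diff_right: "inner_on T w (\<lambda>s. a s - b s) = inner_on T w a - inner_on T w b"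
  unfolding inner_on_def by (simp add: right_diff_distrib sum_subtractf)

lemma inner_on_add_left: "inner_on T (\<lambda>s. a s + b s) w = inner_on T a w + inner_on T b w"
  unfolding inner_on_def by (simp add: distrib_right sum.distrib)

lemma inner_on_add_right: "inner_on T w (\<lambda>s. a s + b s) = inner_on T w a + inner_on T w b"
  unfolding inner_on_def by (simp add: distrib_left sum.distrib)

lemma inner_on_scale_left: "inner_on T (\<lambda>s. c * a s) w = c * inner_on T a w"
  unfolding inner_on_def by (simp add: sum_distrib_left mult_ac)

lemma inner_on_scale_right: "inner_on T w (\<lambda>s. c * a s) = c * inner_on T w a"
  unfolding inner_on_def by (simp add: sum_distrib_left mult_ac)

lemma inner_on_unit_vec_left:
  assumes "finite T" "t \<in> T"
  shows "inner_on T (unit_vec t) u = u t"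
proof -
  have "(if s = t then 1 else 0) * u s = (if s = t then u t else 0)" for s by simp
  then show ?thesis unfolding inner_on_def unit_vec_def using assms by simp
qed

lemma unit_vec_self: "unit_vec t t = 1"
  by (simp add: unit_vec_def)

lemma inner_on_unit_vec_self: "finite T \<Longrightarrow> t \<in> T \<Longrightarrow> inner_on T (unit_vec t) (unit_vec t) = 1"
  by (simp add: inner_on_unit_vec_left unit_vec_self)

lemma inner_on_matvec_symmetric:
  assumes "symmetric_on T M"
  shows "inner_on T (matvec T M u) v = inner_on T u (matvec T M v)"
proof -
  have "inner_on T (matvec T M u) v = (\<Sum>s\<in>T. \<Sum>t\<in>T. M s t * u t * v s)"
    unfolding inner_on_def matvec_def by (simp add: sum_distrib_right)
  also have "\<dots> = (\<Sum>t\<in>T. \<Sum>s\<in>T. M s t * u t * v s)" by (rule sum.swap)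
  also have "\<dots> = inner_on T u (matvec T M v)"
    unfolding inner_on_def matvec_def using assms unfolding symmetric_on_def
    by (auto simp: sum_distrib_left intro!: sum.cong)
  finally show ?thesis .
qed

lemma rayleigh_eq_quadratic_form: "rayleigh T M v = (\<Sum>s\<in>T. \<Sum>t\<in>T. v s * v t * M s t)"
  unfolding rayleigh_def inner_on_def matvec_def
  by (simp add: sum_distrib_right sum_distrib_left mult_ac)

lemma rayleigh_nonneg: "psd_kernel T M \<Longrightarrow> 0 \<le> rayleigh T M v"
  unfolding psd_kernel_def rayleigh_eq_quadratic_form by blast

lemma rayleigh_scale: "rayleigh T M (\<lambda>s. c * w s) = c\<^sup>2 * rayleigh T M w"
proof -
  have "matvec T M (\<lambda>s. c * w s) = (\<lambda>s. c * matvec T M w s)"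
    unfolding matvec_def by (auto simp: sum_distrib_left mult_ac)
  then show ?thesis
    unfolding rayleigh_def by (simp add: inner_on_scale_left inner_on_scale_right power2_eq_square)
qed

lemma matvec_add_scale: "matvec T M (\<lambda>s. a s + c * b s) = (\<lambda>s. matvec T M a s + c * matvec T M b s)"
  unfolding matvec_def by (auto simp: distrib_left sum.distrib sum_distrib_left mult_ac)

lemma supported_on_matvec: "supported_on T (matvec T M v)"
  unfolding matvec_def supported_on_def by auto

lemma continuous_on_inner_on:
  fixes f g :: "('a \<Rightarrow> real) \<Rightarrow> 'a \<Rightarrow> real"
  assumes "continuous_on UNIV f" "continuous_on UNIV g"
  shows "continuous_on UNIV (\<lambda>v. inner_on T (f v) (g v))"
  unfolding inner_on_def
  by (intro continuous_on_sum continuous_on_mult continuous_on_product_then_coordinatewise[OF assms(1)]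
      continuous_on_product_then_coordinatewise[OF assms(2)])

lemma continuous_on_matvec: "continuous_on UNIV (matvec T M)"
  unfolding matvec_def
  apply (rule continuous_on_coordinatewise_then_product)
  subgoal for s by (cases "s \<in> T") (auto intro!: continuous_intros continuous_on_product_coordinates)
  done

lemma eigenvalue_eq_rayleigh:
  assumes "orthonormal_on T B" "eigenvectors T M B" "u \<in> B"
  shows "matvec T M u = (\<lambda>s. rayleigh T M u * u s)"
proof -
  obtain l where l: "matvec T M u = (\<lambda>s. l * u s)"
    using assms(2,3) unfolding eigenvectors_def by blast
  have "rayleigh T M u = l"
    using assms(1,3) unfolding rayleigh_def l inner_on_scale_left orthonormal_on_def by simp
  with l show ?thesis by simp
qed

lemma orthonormal_sum_inner:
  assumes "orthonormal_on T B" "finite B" "u0 \<in> B"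
  shows "(\<Sum>u\<in>B. f u * inner_on T u u0) = f u0"
proof -
  have "(\<Sum>u\<in>B. f u * inner_on T u u0) = (\<Sum>u\<in>B. if u = u0 then f u0 else 0)"
    using assms(1) unfolding orthonormal_on_def by (intro sum.cong) (auto simp: assms)
  also have "\<dots> = f u0" using assms by simp
  finally show ?thesis .
qed

lemma inner_on_proj:
  assumes "orthonormal_on T B" "finite B" "u0 \<in> B"
  shows "inner_on T (proj_on T B v) u0 = inner_on T v u0"
  unfolding proj_on_def inner_on_sum_left using orthonormal_sum_inner[OF assms] .

lemma inner_on_proj_residual:
  assumes "orthonormal_on T B" "finite B" "u0 \<in> B"
  shows "inner_on T (\<lambda>s. v s - proj_on T B v s) u0 = 0"
  by (simp add: inner_on_diff_left inner_on_proj[OF assms])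

lemma supported_on_proj: "orthonormal_on T B \<Longrightarrow> supported_on T (proj_on T B v)"
  unfolding orthonormal_on_def supported_on_def proj_on_def by (auto intro: sum.neutral)

lemma norm_proj_residual:
  assumes "orthonormal_on T B" "finite B"
  shows "inner_on T (\<lambda>s. v s - proj_on T B v s) (\<lambda>s. v s - proj_on T B v s)
     = inner_on T v v - (\<Sum>u\<in>B. (inner_on T v u)\<^sup>2)"
proof -
  have vp: "inner_on T v (proj_on T B v) = (\<Sum>u\<in>B. (inner_on T v u)\<^sup>2)"
    unfolding proj_on_def inner_on_commute[of T v] inner_on_sum_left
    by (simp add: inner_on_commute[of T _ v] power2_eq_square)
  have "inner_on T (proj_on T B v) (proj_on T B v) = (\<Sum>u\<in>B. inner_on T v u * inner_on T u (proj_on T B v))"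
    unfolding proj_on_def[of T B v] by (rule inner_on_sum_left)
  also have "\<dots> = (\<Sum>u\<in>B. (inner_on T v u)\<^sup>2)"
    using inner_on_proj[OF assms]
    by (intro sum.cong) (auto simp: inner_on_commute[of T _ "proj_on T B v"] power2_eq_square)
  finally show ?thesis
    by (simp add: inner_on_diff_left inner_on_diff_right vp inner_on_commute[of T "proj_on T B v" v])
qed

lemma bessel_inequality_unit_vec:
  assumes "orthonormal_on T B" "finite B" "finite T" "t \<in> T"
  shows "(\<Sum>u\<in>B. (u t)\<^sup>2) \<le> 1"
  using norm_proj_residual[OF assms(1,2), of "unit_vec t"]
    inner_on_self_nonneg[of T "\<lambda>s. unit_vec t s - proj_on T B (unit_vec t) s"]
  by (simp add: inner_on_unit_vec_left[OF assms(3,4)] inner_on_unit_vec_self[OF assms(3,4)])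
     (simp add: unit_vec_self)

lemma sum_squares_orthonormal:
  assumes "orthonormal_on T B" "finite B"
  shows "(\<Sum>t\<in>T. \<Sum>u\<in>B. (u t)\<^sup>2) = real (card B)"
proof -
  have "(\<Sum>t\<in>T. \<Sum>u\<in>B. (u t)\<^sup>2) = (\<Sum>u\<in>B. inner_on T u u)"
    unfolding inner_on_def by (subst sum.swap) (simp add: power2_eq_square)
  also have "\<dots> = (\<Sum>u\<in>B. 1)" using assms(1) unfolding orthonormal_on_def by simp
  finally show ?thesis by simp
qed

text \<open>Bessel's inequality at each unit vector, summed over \<open>T\<close>, forces equality when
  \<open>card B = card T\<close>; the residual of every unit vector then vanishes.\<close>

lemma orthonormal_basis_complete:
  assumes "orthonormal_on T B" "finite B" "finite T" "card B = card T" "t \<in> T"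
  shows "(\<Sum>u\<in>B. u t * u s) = (if s = t then 1 else 0)"
proof -
  have full: "(\<Sum>u\<in>B. (u t')\<^sup>2) = 1" if "t' \<in> T" for t'
  proof (rule ccontr)
    assume "(\<Sum>u\<in>B. (u t')\<^sup>2) \<noteq> 1"
    then have "(\<Sum>t\<in>T. \<Sum>u\<in>B. (u t)\<^sup>2) < (\<Sum>t\<in>T. 1)"
      using bessel_inequality_unit_vec[OF assms(1-3)] that
      by (intro sum_strict_mono_ex1[OF assms(3)]) (auto simp: order.strict_iff_order)
    then show False using sum_squares_orthonormal[OF assms(1,2)] assms(4) by simp
  qed
  let ?w = "\<lambda>s. unit_vec t s - proj_on T B (unit_vec t) s"
  have "inner_on T ?w ?w = 0"
    using norm_proj_residual[OF assms(1,2), of "unit_vec t"] full[OF assms(5)]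
    by (simp add: inner_on_unit_vec_left[OF assms(3,5)] inner_on_unit_vec_self[OF assms(3,5)])
       (simp add: unit_vec_self)
  moreover have "supported_on T ?w"
    using supported_on_proj[OF assms(1), of "unit_vec t"] assms(5)
    unfolding supported_on_def unit_vec_def by auto
  ultimately have "?w = (\<lambda>_. 0)" using inner_on_self_eq_0_iff assms(3) by blast
  then have "unit_vec t s = proj_on T B (unit_vec t) s" by (metis diff_eq_eq add_0)
  then show ?thesis
    unfolding proj_on_def using inner_on_unit_vec_left[OF assms(3,5)] by (simp add: unit_vec_def)
qed

lemma orthonormal_basis_expansion:
  assumes "orthonormal_on T B" "finite B" "finite T" "card B = card T" "supported_on T v"
  shows "v s = (\<Sum>u\<in>B. inner_on T v u * u s)"
proof (cases "s \<in> T")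
  case False
  then show ?thesis
    using assms(1,5) unfolding orthonormal_on_def supported_on_def by (auto intro: sum.neutral)
next
  case True
  have "(\<Sum>u\<in>B. inner_on T v u * u s) = (\<Sum>u\<in>B. \<Sum>t\<in>T. v t * u t * u s)"
    unfolding inner_on_def by (simp only: sum_distrib_right)
  also have "\<dots> = (\<Sum>t\<in>T. \<Sum>u\<in>B. v t * u t * u s)" by (rule sum.swap)
  also have "\<dots> = (\<Sum>t\<in>T. v t * (\<Sum>u\<in>B. u t * u s))"
    by (simp only: sum_distrib_left mult.assoc)
  also have "\<dots> = (\<Sum>t\<in>T. v t * (if s = t then 1 else 0))"
    using orthonormal_basis_complete[OF assms(1-4)] by simp
  also have "\<dots> = v s" using True assms(3) by (simp add: if_distrib cong: if_cong)
  finally show ?thesis by simp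
qed

lemma exists_unit_orthogonal:
  assumes "orthonormal_on T B" "finite B" "finite T" "card B < card T"
  shows "\<exists>w. supported_on T w \<and> inner_on T w w = 1 \<and> (\<forall>u\<in>B. inner_on T w u = 0)"
proof -
  have "\<exists>t\<in>T. (\<Sum>u\<in>B. (u t)\<^sup>2) < 1"
  proof (rule ccontr)
    assume "\<not> ?thesis"
    then have "\<forall>t\<in>T. (\<Sum>u\<in>B. (u t)\<^sup>2) = 1"
      using bessel_inequality_unit_vec[OF assms(1-3)] by force
    then show False using sum_squares_orthonormal[OF assms(1,2)] assms(4) by simp
  qed
  then obtain t where t: "t \<in> T" "(\<Sum>u\<in>B. (u t)\<^sup>2) < 1" by auto
  let ?w = "\<lambda>s. unit_vec t s - proj_on T B (unit_vec t) s"
  define c where "c = inner_on T ?w ?w"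
  have c: "c > 0"
    using norm_proj_residual[OF assms(1,2), of "unit_vec t"] t unfolding c_def
    by (simp add: inner_on_unit_vec_left[OF assms(3) t(1)] inner_on_unit_vec_self[OF assms(3) t(1)])
       (simp add: unit_vec_self)
  let ?v = "\<lambda>s. (1 / sqrt c) * ?w s"
  have "inner_on T ?v ?v = 1"
    using c unfolding inner_on_scale_left inner_on_scale_right c_def[symmetric]
    by (simp add: power2_eq_square[symmetric])
  moreover have "supported_on T ?v"
    using supported_on_proj[OF assms(1), of "unit_vec t"] t(1)
    unfolding supported_on_def unit_vec_def by auto
  moreover have "\<forall>u\<in>B. inner_on T ?v u = 0"
    using inner_on_proj_residual[OF assms(1,2)]
      inner_on_scale_left[of T "1 / sqrt c" "\<lambda>s. unit_vec t s - proj_on T B (unit_vec t) s"]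
    by simp
  ultimately show ?thesis by blast
qed

subsection \<open>The spectral theorem\<close>

definition unit_complement :: "'a set \<Rightarrow> ('a \<Rightarrow> real) set \<Rightarrow> ('a \<Rightarrow> real) set"
  where "unit_complement T B =
    {v. supported_on T v \<and> (\<forall>u\<in>B. inner_on T v u = 0) \<and> inner_on T v v = 1}"

lemma compact_unit_complement:
  assumes "finite T"
  shows "compact (unit_complement T B)"
proof -
  let ?box = "Pi UNIV (\<lambda>s. if s \<in> T then {-1..1::real} else {0})"
  have "compactin (product_topology (\<lambda>i. euclidean) UNIV)
          (PiE UNIV (\<lambda>s. if s \<in> T then {-1..1::real} else {0}))"
    by (subst compactin_PiE) auto
  then have box: "compact ?box"
    by (simp add: euclidean_product_topology PiE_UNIV_domain)
  have sub: "unit_complement T B \<subseteq> ?box"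
  proof
    fix v assume v: "v \<in> unit_complement T B"
    have "\<bar>v s\<bar> \<le> 1" if "s \<in> T" for s
    proof -
      have "(v s)\<^sup>2 \<le> (\<Sum>t\<in>T. (v t)\<^sup>2)"
        using assms that by (intro member_le_sum) auto
      also have "\<dots> = 1"
        using v unfolding unit_complement_def inner_on_def by (simp add: power2_eq_square)
      finally show ?thesis by (simp add: abs_square_le_1)
    qed
    then show "v \<in> ?box"
      using v unfolding unit_complement_def supported_on_def by (auto simp: abs_le_iff)
  qed
  have "unit_complement T B =
      (\<Inter>s\<in>-T. {v. v s = 0}) \<inter> (\<Inter>u\<in>B. {v. inner_on T v u = 0}) \<inter> {v. inner_on T v v = 1}"
    unfolding unit_complement_def supported_on_def by auto
  moreover have "closed {v::'a \<Rightarrow> real. v s = 0}" for s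
    by (rule closed_Collect_eq) auto
  moreover have "closed {v::'a \<Rightarrow> real. inner_on T v u = 0}" for u
    by (rule closed_Collect_eq) (auto intro: continuous_on_inner_on)
  moreover have "closed {v::'a \<Rightarrow> real. inner_on T v v = 1}"
    by (rule closed_Collect_eq) (auto intro: continuous_on_inner_on)
  ultimately have "closed (unit_complement T B)"
    by (auto intro!: closed_Int closed_INT)
  from compact_Int_closed[OF box this] sub show ?thesis
    by (simp add: Int_absorb1 Int_absorb2)
qed

lemma orthonormal_on_insert:
  assumes B: "orthonormal_on T B" and v: "v \<in> unit_complement T B"
  shows "v \<notin> B" "orthonormal_on T (insert v B)"
proof -
  have vs: "supported_on T v" "\<forall>u\<in>B. inner_on T v u = 0" "inner_on T v v = 1"
    using v unfolding unit_complement_def by auto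
  show vB: "v \<notin> B" using vs(2,3) by auto
  have Bv: "\<forall>u\<in>B. inner_on T u v = 0" using vs(2) inner_on_commute[of T v] by simp
  show "orthonormal_on T (insert v B)"
    unfolding orthonormal_on_def
  proof (intro conjI ballI)
    fix u assume "u \<in> insert v B"
    then show "supported_on T u" using vs(1) B unfolding orthonormal_on_def by blast
  next
    fix u u' assume "u \<in> insert v B" "u' \<in> insert v B"
    then consider "u = v" "u' = v" | "u = v" "u' \<in> B" | "u \<in> B" "u' = v" | "u \<in> B" "u' \<in> B"
      by blast
    then show "inner_on T u u' = (if u = u' then 1 else 0)"
    proof cases
      case 1
      then show ?thesis using vs(3) by simp
    next
      case 2
      then have "u \<noteq> u'" using vB by blast
      with 2 show ?thesis using vs(2) by simp
    next
      case 3
      then have "u \<noteq> u'" using vB by blast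
      with 3 show ?thesis using Bv by simp
    next
      case 4
      then show ?thesis using B unfolding orthonormal_on_def by blast
    qed
  qed
qed

lemma inner_on_matvec_orthogonal:
  assumes M: "symmetric_on T M" and B: "eigenvectors T M B"
    and u: "u \<in> B" and w: "\<forall>u\<in>B. inner_on T w u = 0"
  shows "inner_on T (matvec T M w) u = 0"
proof -
  obtain c where c: "matvec T M u = (\<lambda>s. c * u s)"
    using B u unfolding eigenvectors_def by blast
  have "inner_on T (matvec T M w) u = inner_on T w (matvec T M u)"
    by (rule inner_on_matvec_symmetric[OF M])
  also have "\<dots> = c * inner_on T w u" by (simp add: c inner_on_scale_right)
  finally show ?thesis using u w by simp
qed

lemma inner_on_add_scale_self:
  "inner_on T (\<lambda>s. v s + e * r s) (\<lambda>s. v s + e * r s)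
    = inner_on T v v + 2 * e * inner_on T v r + e\<^sup>2 * inner_on T r r"
proof -
  have "inner_on T (\<lambda>s. v s + e * r s) (\<lambda>s. v s + e * r s)
      = inner_on T v v + e * inner_on T v r + e * (inner_on T r v + e * inner_on T r r)"
    by (simp only: inner_on_add_left inner_on_add_right inner_on_scale_left inner_on_scale_right
        distrib_left)
  then show ?thesis by (simp add: inner_on_commute[of T r v] power2_eq_square algebra_simps)
qed

lemma rayleigh_add_scale:
  assumes "symmetric_on T M"
  shows "rayleigh T M (\<lambda>s. v s + e * r s)
    = rayleigh T M v + 2 * e * inner_on T (matvec T M v) r + e\<^sup>2 * rayleigh T M r"
proof -
  have "rayleigh T M (\<lambda>s. v s + e * r s) = inner_on T (matvec T M v) v + e * inner_on T (matvec T M v) r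
      + e * (inner_on T (matvec T M r) v + e * rayleigh T M r)"
    unfolding rayleigh_def matvec_add_scale
    by (simp only: inner_on_add_left inner_on_add_right inner_on_scale_left inner_on_scale_right
        distrib_left)
  moreover have "inner_on T (matvec T M r) v = inner_on T (matvec T M v) r"
    using inner_on_matvec_symmetric[OF assms, of r v] by (simp add: inner_on_commute)
  ultimately show ?thesis by (simp add: rayleigh_def power2_eq_square algebra_simps)
qed

lemma rayleigh_le_scaled:
  assumes "finite T" "supported_on T w" "\<forall>u\<in>B. inner_on T w u = 0"
    and max: "\<forall>y\<in>unit_complement T B. rayleigh T M y \<le> l"
  shows "rayleigh T M w \<le> l * inner_on T w w"
proof (cases "inner_on T w w = 0")
  case True
  then have "w = (\<lambda>_. 0)" using inner_on_self_eq_0_iff[OF assms(1,2)] by simp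
  then show ?thesis by (simp add: rayleigh_def inner_on_def)
next
  case False
  define c where "c = inner_on T w w"
  have c: "c > 0" using False inner_on_self_nonneg[of T w] unfolding c_def by simp
  let ?y = "\<lambda>s. (1 / sqrt c) * w s"
  have "inner_on T ?y ?y = (1 / sqrt c) * ((1 / sqrt c) * inner_on T w w)"
    by (simp only: inner_on_scale_left inner_on_scale_right)
  then have "inner_on T ?y ?y = 1"
    unfolding c_def[symmetric] using c by (simp add: power2_eq_square[symmetric])
  moreover have "\<forall>u\<in>B. inner_on T ?y u = 0"
    using assms(3) inner_on_scale_left[of T "1 / sqrt c" w] by simp
  moreover have "supported_on T ?y" using assms(2) by (auto simp: supported_on_def)
  ultimately have "rayleigh T M ?y \<le> l" using max unfolding unit_complement_def by blast
  moreover have "rayleigh T M ?y = rayleigh T M w / c"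
    using rayleigh_scale[of T M "1 / sqrt c" w] c by (simp add: power_divide)
  ultimately show ?thesis using c unfolding c_def[symmetric] by (simp add: divide_le_eq mult.commute)
qed

lemma linear_le_quadratic_imp_nonpos:
  fixes R C :: real
  assumes "\<And>e. 2 * e * R \<le> e\<^sup>2 * C"
  shows "R \<le> 0"
proof (rule ccontr)
  assume "\<not> R \<le> 0"
  then have R: "R > 0" by simp
  define e where "e = R / (\<bar>C\<bar> + 1)"
  have e: "e > 0" using R unfolding e_def by simp
  have "2 * e * R \<le> e\<^sup>2 * C" by (rule assms)
  also have "\<dots> \<le> e\<^sup>2 * (\<bar>C\<bar> + 1)" by (intro mult_left_mono) auto
  also have "\<dots> = e * R" unfolding e_def by (simp add: power2_eq_square)
  finally show False using e R by (simp add: mult_pos_pos)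
qed

text \<open>First-order optimality: perturbing the maximiser \<open>v\<close> to \<open>v + e r\<close>, with \<open>r\<close> the
  residual \<open>M v - l v\<close>, raises the Rayleigh quotient by \<open>2 e |r|\<^sup>2 + O(e\<^sup>2)\<close>, so \<open>r = 0\<close>.\<close>

lemma rayleigh_maximiser_is_eigenvector:
  assumes T: "finite T" and M: "symmetric_on T M" and B: "eigenvectors T M B"
    and v: "v \<in> unit_complement T B"
    and max: "\<forall>y\<in>unit_complement T B. rayleigh T M y \<le> rayleigh T M v"
  shows "matvec T M v = (\<lambda>s. rayleigh T M v * v s)"
proof -
  define l where "l = rayleigh T M v"
  have vs: "supported_on T v" "\<forall>u\<in>B. inner_on T v u = 0" "inner_on T v v = 1"
    using v unfolding unit_complement_def by auto
  define r where "r = (\<lambda>s. matvec T M v s - l * v s)"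
  define R where "R = inner_on T r r"
  have rs: "supported_on T r"
    using vs(1) supported_on_matvec[of T M v] unfolding r_def supported_on_def by auto
  have rB: "\<forall>u\<in>B. inner_on T r u = 0"
    unfolding r_def using inner_on_matvec_orthogonal[OF M B _ vs(2)] vs(2)
    by (simp add: inner_on_diff_left inner_on_scale_left)
  have "inner_on T r v = 0"
    unfolding r_def l_def rayleigh_def by (simp add: inner_on_diff_left inner_on_scale_left vs(3))
  then have rv: "inner_on T v r = 0" by (simp add: inner_on_commute)
  have Mvr: "inner_on T (matvec T M v) r = R"
  proof -
    have "matvec T M v = (\<lambda>s. r s + l * v s)" unfolding r_def by simp
    then show ?thesis
      unfolding R_def by (simp add: inner_on_add_left inner_on_scale_left rv)
  qed
  have perturb: "2 * e * R \<le> e\<^sup>2 * (l * R - rayleigh T M r)" for e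
  proof -
    let ?w = "\<lambda>s. v s + e * r s"
    have "supported_on T ?w" using vs(1) rs unfolding supported_on_def by auto
    moreover have "\<forall>u\<in>B. inner_on T ?w u = 0"
      using vs(2) rB by (simp add: inner_on_add_left inner_on_scale_left)
    ultimately have "rayleigh T M ?w \<le> l * inner_on T ?w ?w"
      using rayleigh_le_scaled[OF T _ _ max] unfolding l_def by blast
    then show ?thesis
      unfolding rayleigh_add_scale[OF M] inner_on_add_scale_self Mvr rv vs(3) R_def[symmetric]
        l_def[symmetric]
      by (simp add: algebra_simps)
  qed
  have "R = 0"
    using linear_le_quadratic_imp_nonpos[OF perturb] inner_on_self_nonneg[of T r] unfolding R_def
    by simp
  then have "r = (\<lambda>_. 0)" using inner_on_self_eq_0_iff[OF T rs] unfolding R_def by simp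
  then have "matvec T M v s = l * v s" for s unfolding r_def by (metis right_minus_eq)
  then show ?thesis unfolding l_def by blast
qed

lemma extend_eigenvectors:
  assumes T: "finite T" and M: "symmetric_on T M"
    and B: "orthonormal_on T B" "finite B" "eigenvectors T M B" and lt: "card B < card T"
  obtains v where "v \<notin> B" "orthonormal_on T (insert v B)" "eigenvectors T M (insert v B)"
proof -
  have ne: "unit_complement T B \<noteq> {}"
    using exists_unit_orthogonal[OF B(1,2) T lt] unfolding unit_complement_def by auto
  have "continuous_on (unit_complement T B) (rayleigh T M)"
    unfolding rayleigh_def
    by (rule continuous_on_subset[OF continuous_on_inner_on[OF continuous_on_matvec]]) auto
  then obtain v where v: "v \<in> unit_complement T B"
    and max: "\<forall>y\<in>unit_complement T B. rayleigh T M y \<le> rayleigh T M v"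
    using continuous_attains_sup[OF compact_unit_complement[OF T] ne] by blast
  have "eigenvectors T M (insert v B)"
    using B(3) rayleigh_maximiser_is_eigenvector[OF T M B(3) v max]
    unfolding eigenvectors_def by blast
  with orthonormal_on_insert[OF B(1) v] show ?thesis by (rule that)
qed

theorem spectral_theorem_on:
  assumes T: "finite T" and M: "symmetric_on T M"
  obtains B where "eigenbasis T M B"
proof -
  have "\<exists>B. finite B \<and> orthonormal_on T B \<and> eigenvectors T M B \<and> card B = k" if "k \<le> card T" for k
    using that
  proof (induction k)
    case 0
    show ?case by (rule exI[of _ "{}"]) (simp add: orthonormal_on_def eigenvectors_def)
  next
    case (Suc k)
    then obtain B where B: "finite B" "orthonormal_on T B" "eigenvectors T M B" "card B = k" by auto
    then obtain v where "v \<notin> B" "orthonormal_on T (insert v B)" "eigenvectors T M (insert v B)"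
      using extend_eigenvectors[OF T M B(2,1,3)] Suc.prems by auto
    then show ?case using B by (intro exI[of _ "insert v B"]) auto
  qed
  then show ?thesis using that unfolding eigenbasis_def by blast
qed

subsection \<open>The positive square root\<close>

lemma sum_mult_sum_swap:
  fixes a b :: "_ \<Rightarrow> real"
  shows "(\<Sum>x\<in>A. a x * (\<Sum>y\<in>B. b y * c x y)) = (\<Sum>y\<in>B. b y * (\<Sum>x\<in>A. a x * c x y))"
proof -
  have "(\<Sum>x\<in>A. a x * (\<Sum>y\<in>B. b y * c x y)) = (\<Sum>x\<in>A. \<Sum>y\<in>B. b y * (a x * c x y))"
    by (simp add: sum_distrib_left mult_ac)
  also have "\<dots> = (\<Sum>y\<in>B. \<Sum>x\<in>A. b y * (a x * c x y))" by (rule sum.swap)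
  also have "\<dots> = (\<Sum>y\<in>B. b y * (\<Sum>x\<in>A. a x * c x y))" by (simp add: sum_distrib_left)
  finally show ?thesis .
qed

lemma eigenbasis_decomposition:
  assumes T: "finite T" and B: "eigenbasis T M B" and st: "s \<in> T" "t \<in> T"
  shows "M s t = (\<Sum>u\<in>B. rayleigh T M u * u s * u t)"
proof -
  have B': "finite B" "orthonormal_on T B" "eigenvectors T M B" "card B = card T"
    using B unfolding eigenbasis_def by auto
  have "M s t = (\<Sum>k\<in>T. M s k * (if k = t then 1 else 0))"
    using st T by (simp add: if_distrib cong: if_cong)
  also have "\<dots> = (\<Sum>k\<in>T. M s k * (\<Sum>u\<in>B. u t * u k))"
    using orthonormal_basis_complete[OF B'(2,1) T B'(4) st(2)] by (simp add: eq_commute)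
  also have "\<dots> = (\<Sum>u\<in>B. u t * (\<Sum>k\<in>T. M s k * u k))"
    by (subst sum_mult_sum_swap) (simp add: mult_ac)
  also have "\<dots> = (\<Sum>u\<in>B. u t * matvec T M u s)" using st by (simp add: matvec_def)
  also have "\<dots> = (\<Sum>u\<in>B. rayleigh T M u * u s * u t)"
    using eigenvalue_eq_rayleigh[OF B'(2,3)] by (intro sum.cong) auto
  finally show ?thesis .
qed

definition psd_root :: "'a set \<Rightarrow> ('a \<Rightarrow> 'a \<Rightarrow> real) \<Rightarrow> ('a \<Rightarrow> real) set \<Rightarrow> 'a \<Rightarrow> 'a \<Rightarrow> real"
  where "psd_root T M B s t = (\<Sum>u\<in>B. sqrt (rayleigh T M u) * u s * u t)"

lemma psd_root_commute: "psd_root T M B s t = psd_root T M B t s"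
  unfolding psd_root_def by (simp add: mult_ac)

lemma psd_root_gram:
  assumes T: "finite T" and B: "eigenbasis T M B" and M: "psd_kernel T M" and st: "s \<in> T" "t \<in> T"
  shows "(\<Sum>k\<in>T. psd_root T M B k s * psd_root T M B k t) = M s t"
proof -
  have B': "finite B" "orthonormal_on T B" using B unfolding eigenbasis_def by auto
  let ?r = "\<lambda>u. sqrt (rayleigh T M u)"
  have "(\<Sum>k\<in>T. psd_root T M B k s * psd_root T M B k t)
      = (\<Sum>k\<in>T. (\<Sum>u\<in>B. (?r u * u s) * u k) * (\<Sum>u'\<in>B. (?r u' * u' t) * u' k))"
    unfolding psd_root_def by (simp add: mult_ac)
  also have "\<dots> = (\<Sum>u\<in>B. (?r u * u s) * (\<Sum>u'\<in>B. (?r u' * u' t) * inner_on T u u'))"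
    unfolding inner_on_def sum_distrib_right sum_distrib_left
    by (subst sum.swap) (simp add: mult_ac sum.swap[of _ T])
  also have "\<dots> = (\<Sum>u\<in>B. (?r u * u s) * (?r u * u t))"
  proof (intro sum.cong refl)
    fix u assume u: "u \<in> B"
    have "(\<Sum>u'\<in>B. (?r u' * u' t) * inner_on T u u') = (\<Sum>u'\<in>B. (?r u' * u' t) * inner_on T u' u)"
      by (simp add: inner_on_commute)
    also have "\<dots> = ?r u * u t" by (rule orthonormal_sum_inner[OF B'(2,1) u])
    finally show "(?r u * u s) * (\<Sum>u'\<in>B. (?r u' * u' t) * inner_on T u u') = (?r u * u s) * (?r u * u t)"
      by simp
  qed
  also have "\<dots> = M s t"
    using eigenbasis_decomposition[OF T B st] rayleigh_nonneg[OF M]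
    by (simp add: mult_ac real_sqrt_mult_self)
  finally show ?thesis .
qed

lemma psd_root_eigenvector:
  assumes T: "finite T" and M: "symmetric_on T M" and B: "eigenbasis T M B"
    and v: "supported_on T v" "matvec T M v = (\<lambda>s. l * v s)" and t: "t \<in> T"
  shows "(\<Sum>k\<in>T. psd_root T M B t k * v k) = sqrt l * v t"
proof -
  have B': "finite B" "orthonormal_on T B" "eigenvectors T M B" "card B = card T"
    using B unfolding eigenbasis_def by auto
  have same_eigenvalue: "sqrt (rayleigh T M u) * inner_on T v u = sqrt l * inner_on T v u"
    if "u \<in> B" for u
  proof -
    have "rayleigh T M u * inner_on T v u = inner_on T (matvec T M u) v"
      by (simp add: eigenvalue_eq_rayleigh[OF B'(2,3) that] inner_on_scale_left inner_on_commute)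
    also have "\<dots> = inner_on T u (matvec T M v)" by (rule inner_on_matvec_symmetric[OF M])
    also have "\<dots> = l * inner_on T v u" by (simp add: v(2) inner_on_scale_right inner_on_commute)
    finally have "(rayleigh T M u - l) * inner_on T v u = 0" by (simp add: algebra_simps)
    then show ?thesis by auto
  qed
  have "(\<Sum>k\<in>T. psd_root T M B t k * v k)
      = (\<Sum>k\<in>T. v k * (\<Sum>u\<in>B. (sqrt (rayleigh T M u) * u t) * u k))"
    unfolding psd_root_def by (simp add: mult_ac)
  also have "\<dots> = (\<Sum>u\<in>B. sqrt (rayleigh T M u) * inner_on T v u * u t)"
    unfolding inner_on_def by (subst sum_mult_sum_swap) (simp add: mult_ac)
  also have "\<dots> = (\<Sum>u\<in>B. sqrt l * (inner_on T v u * u t))"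
    by (intro sum.cong refl) (simp add: same_eigenvalue)
  also have "\<dots> = sqrt l * v t"
    using orthonormal_basis_expansion[OF B'(2,1) T B'(4) v(1), of t]
    by (simp add: sum_distrib_left[symmetric])
  finally show ?thesis .
qed

lemma psd_root_row_sum:
  assumes T: "finite T" and M: "symmetric_on T M" and B: "eigenbasis T M B"
    and rows: "\<forall>s\<in>T. (\<Sum>t\<in>T. M s t) = 0" and s: "s \<in> T"
  shows "(\<Sum>t\<in>T. psd_root T M B s t) = 0"
proof -
  define one where "one = (\<lambda>x. if x \<in> T then 1 else (0::real))"
  have "supported_on T one" unfolding one_def supported_on_def by auto
  moreover have "matvec T M one = (\<lambda>x. 0 * one x)"
    using rows unfolding matvec_def one_def by (auto cong: sum.cong)
  ultimately have "(\<Sum>k\<in>T. psd_root T M B s k * one k) = sqrt 0 * one s"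
    using psd_root_eigenvector[OF T M B _ _ s] by blast
  then show ?thesis unfolding one_def by (simp cong: sum.cong)
qed

lemma matvec_permute:
  assumes \<pi>: "bij_betw \<pi> T T" "\<forall>s\<in>T. \<forall>t\<in>T. M (\<pi> s) (\<pi> t) = M s t"
  shows "matvec T M (\<lambda>x. if x \<in> T then u (\<pi> x) else 0) x = (if x \<in> T then matvec T M u (\<pi> x) else 0)"
proof (cases "x \<in> T")
  case True
  have "(\<Sum>k\<in>T. M x k * (if k \<in> T then u (\<pi> k) else 0)) = (\<Sum>k\<in>T. M (\<pi> x) (\<pi> k) * u (\<pi> k))"
    using \<pi>(2) True by (intro sum.cong) auto
  also have "\<dots> = (\<Sum>k\<in>T. M (\<pi> x) k * u k)"
    using sum.reindex_bij_betw[OF \<pi>(1), of "\<lambda>k. M (\<pi> x) k * u k"] by simp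
  finally show ?thesis
    using True \<pi>(1) by (simp add: matvec_def bij_betwE)
qed (simp add: matvec_def)

text \<open>Being a function of \<open>M\<close>, the square root commutes with every symmetry of \<open>M\<close>:
  for an eigenvector \<open>u\<close>, the permuted vector \<open>u \<circ> \<pi>\<close> is again an eigenvector with the
  same eigenvalue.\<close>

lemma psd_root_invariant:
  assumes T: "finite T" and M: "symmetric_on T M" and B: "eigenbasis T M B"
    and \<pi>: "bij_betw \<pi> T T" "\<forall>s\<in>T. \<forall>t\<in>T. M (\<pi> s) (\<pi> t) = M s t" and st: "s \<in> T" "t \<in> T"
  shows "psd_root T M B (\<pi> s) (\<pi> t) = psd_root T M B s t"
proof -
  have B': "finite B" "orthonormal_on T B" "eigenvectors T M B" "card B = card T"
    using B unfolding eigenbasis_def by auto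
  let ?R = "psd_root T M B" and ?ev = "rayleigh T M"
  have \<pi>T: "\<pi> x \<in> T" if "x \<in> T" for x using \<pi>(1) that by (auto simp: bij_betw_def)
  have \<pi>_inj: "\<pi> x = \<pi> y \<longleftrightarrow> x = y" if "x \<in> T" "y \<in> T" for x y
    using \<pi>(1) that by (auto simp: bij_betw_def inj_on_def)
  have permuted: "(\<Sum>k\<in>T. ?R t k * u (\<pi> k)) = sqrt (?ev u) * u (\<pi> t)" if u: "u \<in> B" for u
  proof -
    define u\<pi> where "u\<pi> = (\<lambda>x. if x \<in> T then u (\<pi> x) else (0::real))"
    have "supported_on T u\<pi>" unfolding u\<pi>_def supported_on_def by auto
    moreover have "matvec T M u\<pi> = (\<lambda>x. ?ev u * u\<pi> x)"
      using matvec_permute[OF \<pi>, of u] eigenvalue_eq_rayleigh[OF B'(2,3) u]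
      unfolding u\<pi>_def by (intro ext) simp
    ultimately have "(\<Sum>k\<in>T. ?R t k * u\<pi> k) = sqrt (?ev u) * u\<pi> t"
      using psd_root_eigenvector[OF T M B _ _ st(2)] by blast
    then show ?thesis using st(2) unfolding u\<pi>_def by (simp cong: sum.cong)
  qed
  have "?R (\<pi> s) (\<pi> t) = (\<Sum>u\<in>B. u (\<pi> s) * (sqrt (?ev u) * u (\<pi> t)))"
    unfolding psd_root_def by (simp add: mult_ac)
  also have "\<dots> = (\<Sum>u\<in>B. u (\<pi> s) * (\<Sum>k\<in>T. ?R t k * u (\<pi> k)))"
    by (intro sum.cong refl) (simp add: permuted)
  also have "\<dots> = (\<Sum>k\<in>T. ?R t k * (\<Sum>u\<in>B. u (\<pi> s) * u (\<pi> k)))"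
    by (rule sum_mult_sum_swap)
  also have "\<dots> = (\<Sum>k\<in>T. ?R t k * (if k = s then 1 else 0))"
  proof (intro sum.cong refl)
    fix k assume k: "k \<in> T"
    have "(\<Sum>u\<in>B. u (\<pi> s) * u (\<pi> k)) = (if \<pi> k = \<pi> s then 1 else 0)"
      by (rule orthonormal_basis_complete[OF B'(2,1) T B'(4) \<pi>T[OF st(1)]])
    then show "?R t k * (\<Sum>u\<in>B. u (\<pi> s) * u (\<pi> k)) = ?R t k * (if k = s then 1 else 0)"
      using \<pi>_inj[OF k st(1)] by simp
  qed
  also have "\<dots> = ?R t s" using st(1) T by (simp add: if_distrib cong: if_cong)
  finally show ?thesis by (simp add: psd_root_commute)
qed

section \<open>Schoenberg's theorem: snowflakes of Euclidean distances are negative type\<close>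

definition cnd_kernel :: "'a set \<Rightarrow> ('a \<Rightarrow> 'a \<Rightarrow> real) \<Rightarrow> bool"
  where "cnd_kernel T K \<longleftrightarrow>
    (\<forall>c. (\<Sum>s\<in>T. c s) = 0 \<longrightarrow> (\<Sum>s\<in>T. \<Sum>t\<in>T. c s * c t * K s t) \<le> 0)"

lemma psd_kernel_inner_power:
  fixes q :: "'a \<Rightarrow> 'v::euclidean_space"
  shows "psd_kernel T (\<lambda>s t. (q s \<bullet> q t) ^ k)"
  unfolding psd_kernel_def
proof (induction k)
  case 0
  have "(\<Sum>s\<in>T. \<Sum>t\<in>T. c s * c t * (q s \<bullet> q t) ^ 0) = (\<Sum>s\<in>T. c s) * (\<Sum>t\<in>T. c t)" for c
    by (simp add: sum_product)
  then show ?case by simp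
next
  case (Suc k)
  show ?case
  proof
    fix c :: "'a \<Rightarrow> real"
    have split: "a * z ^ Suc k = (\<Sum>i\<in>Basis. a * z ^ k * f i)"
      if "z = (\<Sum>i\<in>Basis. f i)" for a z and f :: "'v \<Rightarrow> real"
    proof -
      have "a * z ^ Suc k = (a * z ^ k) * (\<Sum>i\<in>Basis. f i)" using that by (simp add: mult_ac)
      then show ?thesis by (simp add: sum_distrib_left)
    qed
    have "(\<Sum>s\<in>T. \<Sum>t\<in>T. c s * c t * (q s \<bullet> q t) ^ Suc k)
        = (\<Sum>s\<in>T. \<Sum>t\<in>T. \<Sum>i\<in>Basis. c s * c t * (q s \<bullet> q t) ^ k * ((q s \<bullet> i) * (q t \<bullet> i)))"
      by (intro sum.cong refl split euclidean_inner)
    also have "\<dots> = (\<Sum>i\<in>Basis. \<Sum>s\<in>T. \<Sum>t\<in>T.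
        (c s * (q s \<bullet> i)) * (c t * (q t \<bullet> i)) * (q s \<bullet> q t) ^ k)"
      by (simp add: sum.swap[of _ Basis] mult_ac)
    also have "\<dots> \<ge> 0" by (rule sum_nonneg) (rule Suc.IH[rule_format])
    finally show "0 \<le> (\<Sum>s\<in>T. \<Sum>t\<in>T. c s * c t * (q s \<bullet> q t) ^ Suc k)" .
  qed
qed

lemma psd_kernel_exp_inner:
  fixes q :: "'a \<Rightarrow> 'v::euclidean_space"
  assumes "0 \<le> \<sigma>"
  shows "psd_kernel T (\<lambda>s t. exp (\<sigma> * (q s \<bullet> q t)))"
  unfolding psd_kernel_def
proof
  fix c :: "'a \<Rightarrow> real"
  have "(\<lambda>n. c s * c t * ((\<sigma> * (q s \<bullet> q t)) ^ n /\<^sub>R fact n)) sums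
      (c s * c t * exp (\<sigma> * (q s \<bullet> q t)))" for s t
    by (rule sums_mult[OF exp_converges])
  then have series: "(\<lambda>n. \<Sum>s\<in>T. \<Sum>t\<in>T. c s * c t * ((\<sigma> * (q s \<bullet> q t)) ^ n /\<^sub>R fact n)) sums
      (\<Sum>s\<in>T. \<Sum>t\<in>T. c s * c t * exp (\<sigma> * (q s \<bullet> q t)))"
    by (intro sums_sum)
  have terms: "0 \<le> (\<Sum>s\<in>T. \<Sum>t\<in>T. c s * c t * ((\<sigma> * (q s \<bullet> q t)) ^ n /\<^sub>R fact n))" for n
  proof -
    have "c s * c t * ((\<sigma> * (q s \<bullet> q t)) ^ n /\<^sub>R fact n)
        = (\<sigma> ^ n / fact n) * (c s * c t * (q s \<bullet> q t) ^ n)" for s t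
      by (simp add: power_mult_distrib divide_inverse)
    then have "(\<Sum>s\<in>T. \<Sum>t\<in>T. c s * c t * ((\<sigma> * (q s \<bullet> q t)) ^ n /\<^sub>R fact n))
        = (\<sigma> ^ n / fact n) * (\<Sum>s\<in>T. \<Sum>t\<in>T. c s * c t * (q s \<bullet> q t) ^ n)"
      by (simp only: sum_distrib_left)
    also have "\<dots> \<ge> 0"
      using assms psd_kernel_inner_power[of T q n] unfolding psd_kernel_def by simp
    finally show ?thesis .
  qed
  show "0 \<le> (\<Sum>s\<in>T. \<Sum>t\<in>T. c s * c t * exp (\<sigma> * (q s \<bullet> q t)))"
    by (rule sums_le[OF terms sums_zero series])
qed

lemma psd_kernel_gaussian:
  fixes q :: "'a \<Rightarrow> 'v::euclidean_space"
  assumes "0 \<le> \<sigma>"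
  shows "psd_kernel T (\<lambda>s t. exp (- \<sigma> * (dist (q s) (q t))\<^sup>2))"
  unfolding psd_kernel_def
proof
  fix c :: "'a \<Rightarrow> real"
  define b where "b s = c s * exp (- \<sigma> * (q s \<bullet> q s))" for s
  have "c s * c t * exp (- \<sigma> * (dist (q s) (q t))\<^sup>2) = b s * b t * exp ((2 * \<sigma>) * (q s \<bullet> q t))"
    for s t
  proof -
    have "exp (- \<sigma> * (dist (q s) (q t))\<^sup>2)
        = exp (- \<sigma> * (q s \<bullet> q s)) * exp (- \<sigma> * (q t \<bullet> q t)) * exp ((2 * \<sigma>) * (q s \<bullet> q t))"
      by (simp add: exp_add[symmetric] dist_norm power2_norm_eq_inner inner_diff inner_commute
          algebra_simps)
    then show ?thesis unfolding b_def by (simp add: mult_ac)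
  qed
  then show "0 \<le> (\<Sum>s\<in>T. \<Sum>t\<in>T. c s * c t * exp (- \<sigma> * (dist (q s) (q t))\<^sup>2))"
    using psd_kernel_exp_inner[of "2 * \<sigma>" T q] assms unfolding psd_kernel_def by simp
qed

lemma psd_kernel_equality:
  assumes T: "finite T"
  shows "psd_kernel T (\<lambda>s t. if q s = q t then 1 else 0)"
  unfolding psd_kernel_def
proof
  fix c :: "'a \<Rightarrow> real"
  define C where "C y = (\<Sum>t\<in>{t\<in>T. q t = y}. c t)" for y
  have "(\<Sum>s\<in>T. \<Sum>t\<in>T. c s * c t * (if q s = q t then 1 else 0::real)) = (\<Sum>s\<in>T. c s * C (q s))"
  proof (intro sum.cong refl)
    fix s
    have "(\<Sum>t\<in>T. c s * c t * (if q s = q t then 1 else 0::real))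
        = (\<Sum>t\<in>T. c s * (if q t = q s then c t else 0))"
      by (intro sum.cong) auto
    also have "\<dots> = c s * C (q s)" unfolding C_def sum.inter_filter[OF T] sum_distrib_left ..
    finally show "(\<Sum>t\<in>T. c s * c t * (if q s = q t then 1 else 0::real)) = c s * C (q s)" .
  qed
  also have "\<dots> = (\<Sum>y\<in>q ` T. \<Sum>s\<in>{s\<in>T. q s = y}. c s * C (q s))"
    by (rule sum.image_gen[OF T])
  also have "\<dots> = (\<Sum>y\<in>q ` T. C y * C y)"
    unfolding C_def by (intro sum.cong refl) (simp add: sum_distrib_right)
  also have "\<dots> \<ge> 0" by (intro sum_nonneg) simp
  finally show "0 \<le> (\<Sum>s\<in>T. \<Sum>t\<in>T. c s * c t * (if q s = q t then 1 else 0::real))" .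
qed

lemma cnd_kernel_const_minus_psd:
  assumes "psd_kernel T K"
  shows "cnd_kernel T (\<lambda>s t. a - K s t)"
  unfolding cnd_kernel_def
proof (intro allI impI)
  fix c :: "'a \<Rightarrow> real" assume c: "(\<Sum>s\<in>T. c s) = 0"
  have "(\<Sum>s\<in>T. \<Sum>t\<in>T. c s * c t * (a - K s t))
      = a * ((\<Sum>s\<in>T. c s) * (\<Sum>t\<in>T. c t)) - (\<Sum>s\<in>T. \<Sum>t\<in>T. c s * c t * K s t)"
    by (simp add: right_diff_distrib sum_subtractf sum_product sum_distrib_left mult_ac)
  then show "(\<Sum>s\<in>T. \<Sum>t\<in>T. c s * c t * (a - K s t)) \<le> 0"
    using c assms unfolding psd_kernel_def by simp
qed

lemma psd_kernel_scale:
  assumes "psd_kernel T K" "0 \<le> a"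
  shows "psd_kernel T (\<lambda>s t. a * K s t)"
proof -
  have "(\<Sum>s\<in>T. \<Sum>t\<in>T. c s * c t * (a * K s t)) = a * (\<Sum>s\<in>T. \<Sum>t\<in>T. c s * c t * K s t)" for c
    by (simp add: sum_distrib_left mult_ac)
  then show ?thesis using assms unfolding psd_kernel_def by simp
qed

lemma cnd_kernel_scale:
  assumes "cnd_kernel T K" "0 \<le> a"
  shows "cnd_kernel T (\<lambda>s t. a * K s t)"
proof -
  have "(\<Sum>s\<in>T. \<Sum>t\<in>T. c s * c t * (a * K s t)) = a * (\<Sum>s\<in>T. \<Sum>t\<in>T. c s * c t * K s t)" for c
    by (simp add: sum_distrib_left mult_ac)
  then show ?thesis
    using assms unfolding cnd_kernel_def by (simp add: mult_nonneg_nonpos)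
qed

lemma cnd_kernel_tendsto:
  fixes K :: "'b \<Rightarrow> 'a \<Rightarrow> 'a \<Rightarrow> real"
  assumes "F \<noteq> bot" "\<forall>\<^sub>F L in F. cnd_kernel T (K L)"
    and "\<And>s t. ((\<lambda>L. K L s t) \<longlongrightarrow> K' s t) F"
  shows "cnd_kernel T K'"
  unfolding cnd_kernel_def
proof (intro allI impI)
  fix c :: "'a \<Rightarrow> real" assume c: "(\<Sum>s\<in>T. c s) = 0"
  have "((\<lambda>L. \<Sum>s\<in>T. \<Sum>t\<in>T. c s * c t * K L s t) \<longlongrightarrow> (\<Sum>s\<in>T. \<Sum>t\<in>T. c s * c t * K' s t)) F"
    by (intro tendsto_sum tendsto_mult_left assms(3))
  moreover have "\<forall>\<^sub>F L in F. (\<Sum>s\<in>T. \<Sum>t\<in>T. c s * c t * K L s t) \<le> 0"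
    using assms(2) by eventually_elim (use c in \<open>auto simp: cnd_kernel_def\<close>)
  ultimately show "(\<Sum>s\<in>T. \<Sum>t\<in>T. c s * c t * K' s t) \<le> 0"
    using assms(1) by (rule tendsto_upperbound)
qed

lemma cnd_kernel_sums:
  assumes "\<And>n. cnd_kernel T (K n)" and "\<And>s t. (\<lambda>n. K n s t) sums K' s t"
  shows "cnd_kernel T K'"
  unfolding cnd_kernel_def
proof (intro allI impI)
  fix c :: "'a \<Rightarrow> real" assume c: "(\<Sum>s\<in>T. c s) = 0"
  have series: "(\<lambda>n. \<Sum>s\<in>T. \<Sum>t\<in>T. c s * c t * K n s t) sums (\<Sum>s\<in>T. \<Sum>t\<in>T. c s * c t * K' s t)"
    by (intro sums_sum sums_mult assms(2))
  have terms: "(\<Sum>s\<in>T. \<Sum>t\<in>T. c s * c t * K n s t) \<le> 0" for n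
    using assms(1) c unfolding cnd_kernel_def by blast
  show "(\<Sum>s\<in>T. \<Sum>t\<in>T. c s * c t * K' s t) \<le> 0"
    by (rule sums_le[OF terms series sums_zero])
qed

lemma gbinomial_alternating_nonpos:
  fixes a :: real
  assumes a: "0 < a" "a \<le> 1" and k: "1 \<le> k"
  shows "(a gchoose k) * (-1) ^ k \<le> 0"
proof -
  define p where "p k = (\<Prod>i=0..<k. a - of_nat i)" for k
  have "p k * (-1) ^ k \<le> 0" using k
  proof (induction k)
    case 0 then show ?case by simp
  next
    case (Suc k)
    show ?case
    proof (cases "k = 0")
      case True then show ?thesis using a by (simp add: p_def)
    next
      case False
      then have ih: "p k * (-1) ^ k \<le> 0" using Suc.IH by simp
      have "p (Suc k) * (-1) ^ Suc k = (p k * (-1) ^ k) * (of_nat k - a)"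
        by (simp add: p_def algebra_simps)
      also have "\<dots> \<le> 0" by (rule mult_nonpos_nonneg[OF ih]) (use False a in auto)
      finally show ?thesis .
    qed
  qed
  moreover have "(a gchoose k) = p k / fact k" unfolding gbinomial_prod_rev p_def by simp
  ultimately show ?thesis
    by (metis (no_types, lifting) divide_nonpos_pos fact_gt_zero times_divide_eq_left)
qed

text \<open>Expanding \<open>(1 - \<rho> e\<^sup>-\<^sup>x\<^sup>/\<^sup>L)\<^sup>\<alpha>\<close> by the binomial series writes this kernel as a constant
  minus a nonnegative combination of Gaussian kernels: for \<open>n \<ge> 1\<close> the coefficient
  \<open>(\<alpha> choose n)(-\<rho>)\<^sup>n\<close> of \<open>e\<^sup>-\<^sup>n\<^sup>x\<^sup>/\<^sup>L\<close> is nonpositive. Taking \<open>\<rho> = 1 - 1/L\<^sup>2 < 1\<close>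
  keeps the series convergent.\<close>

lemma cnd_kernel_binomial_gaussian:
  fixes q :: "'a \<Rightarrow> 'v::euclidean_space"
  assumes a: "0 < \<alpha>" "\<alpha> \<le> 1" and L: "1 < L"
  shows "cnd_kernel T (\<lambda>s t. (1 - (1 - 1 / L\<^sup>2) * exp (- (dist (q s) (q t))\<^sup>2 / L)) powr \<alpha>)"
proof -
  define \<rho> where "\<rho> = 1 - 1 / L\<^sup>2"
  have \<rho>: "0 < \<rho>" "\<rho> < 1" unfolding \<rho>_def using L by (auto simp: divide_less_eq one_less_power)
  define E where "E s t = exp (- (dist (q s) (q t))\<^sup>2 / L)" for s t
  have E_power: "E s t ^ n = exp (- (real n / L) * (dist (q s) (q t))\<^sup>2)" for n s t
    unfolding E_def by (simp add: exp_of_nat_mult[symmetric])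
  have z: "\<bar>- \<rho> * E s t\<bar> < 1" for s t
  proof -
    have "\<rho> * E s t \<le> \<rho>" using \<rho> L unfolding E_def by (simp add: mult_left_le)
    moreover have "\<bar>- \<rho> * E s t\<bar> = \<rho> * E s t" using \<rho> unfolding E_def by (simp add: abs_mult)
    ultimately show ?thesis using \<rho> by linarith
  qed
  have "cnd_kernel T (\<lambda>s t. (\<alpha> gchoose n) * (- \<rho> * E s t) ^ n)" for n
  proof (cases "n = 0")
    case True
    have "cnd_kernel T (\<lambda>s t. 1 - 0)"
      by (rule cnd_kernel_const_minus_psd) (simp add: psd_kernel_def)
    with True show ?thesis by simp
  next
    case False
    have "(- \<rho> * E s t) ^ n = (-1) ^ n * \<rho> ^ n * E s t ^ n" for s t
    proof -
      have "(- \<rho> * E s t) ^ n = ((-1) * \<rho> * E s t) ^ n" by simp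
      also have "\<dots> = (-1) ^ n * \<rho> ^ n * E s t ^ n" by (simp only: power_mult_distrib)
      finally show ?thesis .
    qed
    then have eq: "(\<alpha> gchoose n) * (- \<rho> * E s t) ^ n
        = 0 - (- ((\<alpha> gchoose n) * (-1) ^ n) * \<rho> ^ n) * E s t ^ n" for s t
      by (simp add: algebra_simps)
    have "psd_kernel T (\<lambda>s t. (- ((\<alpha> gchoose n) * (-1) ^ n) * \<rho> ^ n) * E s t ^ n)"
      using gbinomial_alternating_nonpos[OF a, of n] False \<rho> L psd_kernel_gaussian[of "real n / L" T q]
      unfolding E_power by (intro psd_kernel_scale) (auto intro: mult_nonpos_nonneg)
    then show ?thesis unfolding eq by (rule cnd_kernel_const_minus_psd)
  qed
  moreover have "(\<lambda>n. (\<alpha> gchoose n) * (- \<rho> * E s t) ^ n) sums (1 + - \<rho> * E s t) powr \<alpha>" for s t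
    by (rule gen_binomial_real[OF z])
  ultimately have "cnd_kernel T (\<lambda>s t. (1 + - \<rho> * E s t) powr \<alpha>)"
    by (rule cnd_kernel_sums)
  moreover have "1 + - \<rho> * E s t = 1 - (1 - 1 / L\<^sup>2) * exp (- (dist (q s) (q t))\<^sup>2 / L)" for s t
    unfolding \<rho>_def E_def by (simp add: algebra_simps)
  ultimately show ?thesis by simp
qed

lemma gaussian_defect_nonneg:
  fixes L x :: real
  assumes "1 < L" "0 \<le> x"
  shows "0 \<le> 1 - (1 - 1 / L\<^sup>2) * exp (- x / L)"
proof -
  have "(1 - 1 / L\<^sup>2) * exp (- x / L) \<le> 1 * 1"
    by (rule mult_mono) (use assms in \<open>auto simp: one_less_power less_imp_le\<close>)
  then show ?thesis by simp
qed

lemma tendsto_rescaled_gaussian_defect_powr: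
  fixes x \<alpha> :: real
  assumes x: "0 \<le> x" and \<alpha>: "0 < \<alpha>"
  shows "((\<lambda>L. (L * (1 - (1 - 1 / L\<^sup>2) * exp (- x / L))) powr \<alpha>) \<longlongrightarrow> x powr \<alpha>) at_top"
proof -
  have lim: "((\<lambda>L. L * (1 - (1 - 1 / L\<^sup>2) * exp (- x / L))) \<longlongrightarrow> x) at_top"
  proof (cases "x = 0")
    case True
    then show ?thesis by simp real_asymp
  next
    case False
    with x have "x > 0" by simp
    then show ?thesis by real_asymp
  qed
  have "\<forall>\<^sub>F L in at_top. 0 \<le> L * (1 - (1 - 1 / L\<^sup>2) * exp (- x / L))"
    using eventually_gt_at_top[of "1::real"]
    by (rule eventually_mono) (use gaussian_defect_nonneg x in auto)
  then show ?thesis using \<alpha> by (intro tendsto_powr'[OF lim tendsto_const]) auto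
qed

theorem cnd_kernel_snowflake:
  fixes q :: "'a \<Rightarrow> 'v::euclidean_space"
  assumes T: "finite T" and a: "0 \<le> \<alpha>" "\<alpha> \<le> 1"
  shows "cnd_kernel T (\<lambda>s t. (dist (q s) (q t) powr \<alpha>)\<^sup>2)"
proof (cases "\<alpha> = 0")
  case True
  have "(dist (q s) (q t) powr \<alpha>)\<^sup>2 = 1 - (if q s = q t then 1 else 0)" for s t
    using True by simp
  then show ?thesis
    using cnd_kernel_const_minus_psd[OF psd_kernel_equality[OF T, of q], of 1] by simp
next
  case False
  with a have a0: "0 < \<alpha>" by simp
  define x where "x s t = (dist (q s) (q t))\<^sup>2" for s t
  define K where "K L s t = (L * (1 - (1 - 1 / L\<^sup>2) * exp (- x s t / L))) powr \<alpha>" for L s t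
  have "\<forall>\<^sub>F L in at_top. cnd_kernel T (K L)"
    using eventually_gt_at_top[of "1::real"]
  proof eventually_elim
    case (elim L)
    have "K L = (\<lambda>s t. L powr \<alpha> * (1 - (1 - 1 / L\<^sup>2) * exp (- x s t / L)) powr \<alpha>)"
      unfolding K_def using elim gaussian_defect_nonneg[OF elim] unfolding x_def
      by (intro ext) (simp add: powr_mult)
    then show ?case
      using cnd_kernel_scale[OF cnd_kernel_binomial_gaussian[OF a0 a(2) elim, where T = T and q = q]]
      unfolding x_def by simp
  qed
  moreover have "((\<lambda>L. K L s t) \<longlongrightarrow> x s t powr \<alpha>) at_top" for s t
    unfolding K_def x_def by (rule tendsto_rescaled_gaussian_defect_powr[OF _ a0]) simp
  ultimately have "cnd_kernel T (\<lambda>s t. x s t powr \<alpha>)"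
    by (rule cnd_kernel_tendsto[OF trivial_limit_at_top_linorder])
  moreover have "x s t powr \<alpha> = (dist (q s) (q t) powr \<alpha>)\<^sup>2" for s t
    unfolding x_def using a0
    by (cases "q s = q t") (simp_all add: powr_powr[symmetric] powr_mult_base powr_add[symmetric]
        power2_eq_square powr_numeral[symmetric])
  ultimately show ?thesis by simp
qed

section \<open>From negative type to Euclidean distances\<close>

definition row_mean :: "'a set \<Rightarrow> ('a \<Rightarrow> 'a \<Rightarrow> real) \<Rightarrow> 'a \<Rightarrow> real"
  where "row_mean T N s = (\<Sum>t\<in>T. N s t) / card T"

text \<open>The Gram matrix \<open>-\<^sup>1\<^sub>2 J N J\<close> of the centred configuration, \<open>J\<close> being the
  projection onto vectors with coordinate sum zero.\<close>

definition double_centering :: "'a set \<Rightarrow> ('a \<Rightarrow> 'a \<Rightarrow> real) \<Rightarrow> 'a \<Rightarrow> 'a \<Rightarrow> real"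
  where "double_centering T N s t =
    - (N s t - row_mean T N s - row_mean T N t + (\<Sum>u\<in>T. row_mean T N u) / card T) / 2"

lemma double_centering_symmetric:
  "symmetric_on T N \<Longrightarrow> symmetric_on T (double_centering T N)"
  unfolding symmetric_on_def double_centering_def by auto

lemma double_centering_row_sum:
  assumes "finite T" "T \<noteq> {}" "s \<in> T"
  shows "(\<Sum>t\<in>T. double_centering T N s t) = 0"
proof -
  have card: "real (card T) > 0" using assms by (simp add: card_gt_0_iff)
  define \<rho> where "\<rho> = (\<Sum>u\<in>T. row_mean T N u) / card T"
  have "(\<Sum>t\<in>T. double_centering T N s t)
      = - ((\<Sum>t\<in>T. N s t) - card T * row_mean T N s - (\<Sum>t\<in>T. row_mean T N t) + card T * \<rho>) / 2"
    unfolding double_centering_def \<rho>_def[symmetric]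
    by (simp add: sum_divide_distrib[symmetric] sum_subtractf sum.distrib sum_negf)
  then show ?thesis using card unfolding \<rho>_def row_mean_def by simp
qed

lemma double_centering_distance:
  assumes "N s s = 0" "N t t = 0"
  shows "double_centering T N s s + double_centering T N t t - 2 * double_centering T N s t = N s t"
  using assms unfolding double_centering_def by (simp add: field_simps)

lemma double_centering_invariant:
  assumes \<pi>: "bij_betw \<pi> T T" "\<forall>s\<in>T. \<forall>t\<in>T. N (\<pi> s) (\<pi> t) = N s t" and st: "s \<in> T" "t \<in> T"
  shows "double_centering T N (\<pi> s) (\<pi> t) = double_centering T N s t"
proof -
  have "row_mean T N (\<pi> s) = row_mean T N s" if "s \<in> T" for s
  proof -
    have "(\<Sum>t\<in>T. N (\<pi> s) t) = (\<Sum>t\<in>T. N (\<pi> s) (\<pi> t))"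
      using sum.reindex_bij_betw[OF \<pi>(1), of "\<lambda>t. N (\<pi> s) t"] by simp
    also have "\<dots> = (\<Sum>t\<in>T. N s t)" using \<pi>(2) that by simp
    finally show ?thesis unfolding row_mean_def by simp
  qed
  then show ?thesis unfolding double_centering_def using \<pi>(2) st by simp
qed

lemma quadratic_form_shift:
  fixes M :: "'a \<Rightarrow> 'a \<Rightarrow> real"
  assumes rows: "\<forall>s\<in>T. (\<Sum>t\<in>T. M s t) = 0" and cols: "\<forall>t\<in>T. (\<Sum>s\<in>T. M s t) = 0"
  shows "(\<Sum>s\<in>T. \<Sum>t\<in>T. (w s + m) * (w t + m) * M s t) = (\<Sum>s\<in>T. \<Sum>t\<in>T. w s * w t * M s t)"
proof -
  have e: "(w s + m) * (w t + m) * M s t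
      = w s * w t * M s t + (m * w s + m * m) * M s t + m * w t * M s t" for s t
    by (simp add: algebra_simps)
  have row_terms: "(\<Sum>s\<in>T. \<Sum>t\<in>T. (m * w s + m * m) * M s t) = 0"
    using rows by (simp add: sum_distrib_left[symmetric])
  have col_terms: "(\<Sum>s\<in>T. \<Sum>t\<in>T. m * w t * M s t) = 0"
    using cols by (subst sum.swap) (simp add: sum_distrib_left[symmetric])
  show ?thesis unfolding e sum.distrib row_terms col_terms by simp
qed

lemma quadratic_form_sum_zero:
  fixes w a b :: "'a \<Rightarrow> real"
  assumes w: "(\<Sum>s\<in>T. w s) = 0"
  shows "(\<Sum>s\<in>T. \<Sum>t\<in>T. w s * w t * (a s + b t)) = 0"
proof -
  have a: "(\<Sum>s\<in>T. \<Sum>t\<in>T. w s * w t * a s) = (\<Sum>s\<in>T. w s * a s * (\<Sum>t\<in>T. w t))"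
    by (simp add: sum_distrib_left mult_ac)
  have b: "(\<Sum>s\<in>T. \<Sum>t\<in>T. w s * w t * b t) = (\<Sum>t\<in>T. w t * b t * (\<Sum>s\<in>T. w s))"
    by (subst sum.swap) (simp add: sum_distrib_left mult_ac)
  show ?thesis unfolding distrib_left sum.distrib a b using w by simp
qed

lemma double_centering_psd:
  assumes T: "finite T" "T \<noteq> {}" and N: "symmetric_on T N" "cnd_kernel T N"
  shows "psd_kernel T (double_centering T N)"
  unfolding psd_kernel_def
proof
  fix v :: "'a \<Rightarrow> real"
  let ?M = "double_centering T N"
  have card: "real (card T) > 0" using T by (simp add: card_gt_0_iff)
  define m where "m = (\<Sum>s\<in>T. v s) / card T"
  define w where "w s = v s - m" for s
  have w: "(\<Sum>s\<in>T. w s) = 0" unfolding w_def m_def using card by (simp add: sum_subtractf)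
  have rows: "\<forall>s\<in>T. (\<Sum>t\<in>T. ?M s t) = 0" using double_centering_row_sum[OF T] by blast
  then have cols: "\<forall>t\<in>T. (\<Sum>s\<in>T. ?M s t) = 0"
    using double_centering_symmetric[OF N(1)] unfolding symmetric_on_def
    by (metis (no_types, lifting) sum.cong)
  define \<rho> where "\<rho> = (\<Sum>u\<in>T. row_mean T N u) / card T"
  have expand: "w s * w t * ?M s t
      = w s * w t * (row_mean T N s / 2 + (row_mean T N t / 2 - \<rho> / 2)) - w s * w t * N s t / 2"
    for s t
    unfolding double_centering_def \<rho>_def by (simp add: field_simps)
  have "(\<Sum>s\<in>T. \<Sum>t\<in>T. v s * v t * ?M s t) = (\<Sum>s\<in>T. \<Sum>t\<in>T. w s * w t * ?M s t)"
    using quadratic_form_shift[OF rows cols, of w m] unfolding w_def by simp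
  also have "\<dots> = (\<Sum>s\<in>T. \<Sum>t\<in>T. w s * w t * (row_mean T N s / 2 + (row_mean T N t / 2 - \<rho> / 2)))
      - (\<Sum>s\<in>T. \<Sum>t\<in>T. w s * w t * N s t) / 2"
    by (simp only: expand sum_subtractf sum_divide_distrib)
  also have "\<dots> = - (\<Sum>s\<in>T. \<Sum>t\<in>T. w s * w t * N s t) / 2"
    using quadratic_form_sum_zero[OF w] by simp
  also have "\<dots> \<ge> 0" using N(2) w unfolding cnd_kernel_def by simp
  finally show "0 \<le> (\<Sum>s\<in>T. \<Sum>t\<in>T. v s * v t * ?M s t)" .
qed

lemma sum_square_diff:
  fixes f g :: "'a \<Rightarrow> real"
  shows "(\<Sum>k\<in>T. (f k - g k)\<^sup>2) = (\<Sum>k\<in>T. f k * f k) + (\<Sum>k\<in>T. g k * g k) - 2 * (\<Sum>k\<in>T. f k * g k)"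
  by (simp add: power2_eq_square algebra_simps sum.distrib sum_subtractf sum_distrib_left)

theorem cnd_kernel_euclidean_realisation:
  assumes T: "finite T" "T \<noteq> {}" and N: "symmetric_on T N" "\<forall>s\<in>T. N s s = 0" "cnd_kernel T N"
  obtains R where "\<And>s t. s \<in> T \<Longrightarrow> t \<in> T \<Longrightarrow> (\<Sum>k\<in>T. (R k s - R k t)\<^sup>2) = N s t"
    and "\<And>t. t \<in> T \<Longrightarrow> (\<Sum>k\<in>T. R k t) = 0"
    and "\<And>\<pi> s t. bij_betw \<pi> T T \<Longrightarrow> \<forall>s\<in>T. \<forall>t\<in>T. N (\<pi> s) (\<pi> t) = N s t \<Longrightarrow>
      s \<in> T \<Longrightarrow> t \<in> T \<Longrightarrow> R (\<pi> s) (\<pi> t) = R s t"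
proof -
  let ?M = "double_centering T N"
  have sym: "symmetric_on T ?M" by (rule double_centering_symmetric[OF N(1)])
  have psd: "psd_kernel T ?M" by (rule double_centering_psd[OF T N(1,3)])
  obtain B where B: "eigenbasis T ?M B" using spectral_theorem_on[OF T(1) sym] by blast
  let ?R = "psd_root T ?M B"
  show ?thesis
  proof (rule that)
    fix s t assume st: "s \<in> T" "t \<in> T"
    have "(\<Sum>k\<in>T. (?R k s - ?R k t)\<^sup>2)
        = (\<Sum>k\<in>T. ?R k s * ?R k s) + (\<Sum>k\<in>T. ?R k t * ?R k t) - 2 * (\<Sum>k\<in>T. ?R k s * ?R k t)"
      by (rule sum_square_diff)
    also have "\<dots> = ?M s s + ?M t t - 2 * ?M s t"
      by (simp only: psd_root_gram[OF T(1) B psd] st)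
    also have "\<dots> = N s t" by (rule double_centering_distance) (use N(2) st in auto)
    finally show "(\<Sum>k\<in>T. (?R k s - ?R k t)\<^sup>2) = N s t" .
  next
    fix t assume t: "t \<in> T"
    have "(\<Sum>k\<in>T. ?R k t) = (\<Sum>k\<in>T. ?R t k)" by (simp add: psd_root_commute)
    also have "\<dots> = 0"
      using psd_root_row_sum[OF T(1) sym B _ t] double_centering_row_sum[OF T] by blast
    finally show "(\<Sum>k\<in>T. ?R k t) = 0" .
  next
    fix \<pi> s t assume \<pi>: "bij_betw \<pi> T T" "\<forall>s\<in>T. \<forall>t\<in>T. N (\<pi> s) (\<pi> t) = N s t"
      and st: "s \<in> T" "t \<in> T"
    show "?R (\<pi> s) (\<pi> t) = ?R s t"
      using psd_root_invariant[OF T(1) sym B \<pi>(1) _ st] double_centering_invariant[OF \<pi>] by blast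
  qed
qed

section \<open>Embedding the snowflake into \<open>Q(n,G)\<close>\<close>

text \<open>Coordinates of \<open>\<real>[G]\<^sup>n\<close> are indexed by \<open>{..<n} \<times> carrier G\<close>. A column of a kernel
  on this index set is shifted by the constant that gives it total mass one if its sum
  vanishes.\<close>

definition column_point :: "nat \<Rightarrow> ('g, 'b) monoid_scheme \<Rightarrow> (nat \<times> 'g \<Rightarrow> nat \<times> 'g \<Rightarrow> real) \<Rightarrow>
    nat \<times> 'g \<Rightarrow> nat \<Rightarrow> 'g \<Rightarrow> real"
  where "column_point n G R a = (\<lambda>j g. if j < n \<and> g \<in> carrier G
    then R (j, g) a + 1 / real (card ({..<n} \<times> carrier G)) else 0)"

lemma sum_index_product:
  "(\<Sum>j<n. \<Sum>g\<in>carrier G. f (j, g)) = (\<Sum>k\<in>{..<n} \<times> carrier G. f k)"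
  by (simp add: sum.cartesian_product)

lemma column_point_in_L1:
  assumes fin: "finite (carrier G)" and ne: "{..<n} \<times> carrier G \<noteq> {}"
    and cols: "(\<Sum>k\<in>{..<n} \<times> carrier G. R k a) = 0"
  shows "column_point n G R a \<in> L1 n G"
proof -
  let ?T = "{..<n} \<times> carrier G"
  have "(\<Sum>j<n. \<Sum>g\<in>carrier G. column_point n G R a j g)
      = (\<Sum>k\<in>?T. R k a + 1 / real (card ?T))"
    unfolding column_point_def sum_index_product[symmetric] by (intro sum.cong refl) auto
  also have "\<dots> = 1"
    using cols ne fin by (cases "n = 0") (auto simp: sum.distrib card_cartesian_product)
  finally show ?thesis unfolding L1_def column_point_def by auto
qed

lemma RG_dist_column_point:
  "RG_dist n G (column_point n G R a) (column_point n G R b)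
    = sqrt (\<Sum>k\<in>{..<n} \<times> carrier G. (R k a - R k b)\<^sup>2)"
proof -
  have "(\<Sum>j<n. \<Sum>g\<in>carrier G. (column_point n G R a j g - column_point n G R b j g)\<^sup>2)
      = (\<Sum>j<n. \<Sum>g\<in>carrier G. (R (j, g) a - R (j, g) b)\<^sup>2)"
    unfolding column_point_def by (intro sum.cong refl) auto
  then show ?thesis
    unfolding RG_dist_def using sum_index_product[where f = "\<lambda>k. (R k a - R k b)\<^sup>2"] by simp
qed

definition translate :: "('g, 'b) monoid_scheme \<Rightarrow> 'g \<Rightarrow> nat \<times> 'g \<Rightarrow> nat \<times> 'g"
  where "translate G h = (\<lambda>(j, g). (j, h \<otimes>\<^bsub>G\<^esub> g))"

lemma (in group) bij_betw_translate:
  assumes "h \<in> carrier G"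
  shows "bij_betw (translate G h) ({..<n} \<times> carrier G) ({..<n} \<times> carrier G)"
proof (rule bij_betwI[where g = "translate G (inv h)"])
  show "translate G h \<in> {..<n} \<times> carrier G \<rightarrow> {..<n} \<times> carrier G"
    "translate G (inv h) \<in> {..<n} \<times> carrier G \<rightarrow> {..<n} \<times> carrier G"
    using assms unfolding translate_def by auto
  fix p assume "p \<in> {..<n} \<times> carrier G"
  then show "translate G (inv h) (translate G h p) = p" "translate G h (translate G (inv h) p) = p"
    using assms unfolding translate_def by (auto simp: m_assoc[symmetric])
qed

lemma (in group) reg_act_column_point:
  assumes h: "h \<in> carrier G" and i: "i < n"
    and inv: "\<And>s t. s \<in> {..<n} \<times> carrier G \<Longrightarrow> t \<in> {..<n} \<times> carrier G \<Longrightarrow>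
      R (translate G h s) (translate G h t) = R s t"
  shows "reg_act G h (column_point n G R (i, \<one>)) = column_point n G R (i, h)"
proof (intro ext)
  fix j g
  show "reg_act G h (column_point n G R (i, \<one>)) j g = column_point n G R (i, h) j g"
  proof (cases "j < n \<and> g \<in> carrier G")
    case True
    then have "R (j, inv h \<otimes> g) (i, \<one>) = R (translate G h (j, inv h \<otimes> g)) (translate G h (i, \<one>))"
      using inv[of "(j, inv h \<otimes> g)" "(i, \<one>)"] h i by simp
    also have "\<dots> = R (j, g) (i, h)"
      using True h unfolding translate_def by (simp add: m_assoc[symmetric])
    finally show ?thesis
      using True h unfolding reg_act_def column_point_def by simp
  qed (auto simp: reg_act_def column_point_def)
qed

lemma (in group) Q_dist_column_point:
  assumes "j < n"
    and inv: "\<And>h s t. h \<in> carrier G \<Longrightarrow> s \<in> {..<n} \<times> carrier G \<Longrightarrow>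
      t \<in> {..<n} \<times> carrier G \<Longrightarrow> R (translate G h s) (translate G h t) = R s t"
  shows "Q_dist n G (column_point n G R a) (column_point n G R (j, \<one>))
    = Min ((\<lambda>h. sqrt (\<Sum>k\<in>{..<n} \<times> carrier G. (R k a - R k (j, h))\<^sup>2)) ` carrier G)"
proof -
  have "RG_dist n G (column_point n G R a) (reg_act G h (column_point n G R (j, \<one>)))
      = sqrt (\<Sum>k\<in>{..<n} \<times> carrier G. (R k a - R k (j, h))\<^sup>2)" if h: "h \<in> carrier G" for h
  proof -
    have "reg_act G h (column_point n G R (j, \<one>)) = column_point n G R (j, h)"
      by (rule reg_act_column_point) (use h assms(1) inv[OF h] in auto)
    then show ?thesis by (simp only: RG_dist_column_point)
  qed
  then show ?thesis unfolding Q_dist_def by (intro arg_cong[where f = Min] image_cong) auto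
qed

lemma (in group) orbit_snowflake_realisation:
  fixes q :: "nat \<times> 'a \<Rightarrow> 'v::euclidean_space"
  assumes fin: "finite (carrier G)" and ne: "{..<n} \<times> carrier G \<noteq> {}" and \<alpha>: "0 \<le> \<alpha>" "\<alpha> \<le> 1"
    and iso: "\<And>h s t. h \<in> carrier G \<Longrightarrow> s \<in> {..<n} \<times> carrier G \<Longrightarrow> t \<in> {..<n} \<times> carrier G \<Longrightarrow>
      dist (q (translate G h s)) (q (translate G h t)) = dist (q s) (q t)"
  obtains R where
    "\<And>s t. s \<in> {..<n} \<times> carrier G \<Longrightarrow> t \<in> {..<n} \<times> carrier G \<Longrightarrow>
      (\<Sum>k\<in>{..<n} \<times> carrier G. (R k s - R k t)\<^sup>2) = (dist (q s) (q t) powr \<alpha>)\<^sup>2"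
    and "\<And>t. t \<in> {..<n} \<times> carrier G \<Longrightarrow> (\<Sum>k\<in>{..<n} \<times> carrier G. R k t) = 0"
    and "\<And>h s t. h \<in> carrier G \<Longrightarrow> s \<in> {..<n} \<times> carrier G \<Longrightarrow> t \<in> {..<n} \<times> carrier G \<Longrightarrow>
      R (translate G h s) (translate G h t) = R s t"
proof -
  define T where "T = {..<n} \<times> carrier G"
  define N where "N s t = (dist (q s) (q t) powr \<alpha>)\<^sup>2" for s t
  have T: "finite T" "T \<noteq> {}" using fin ne unfolding T_def by auto
  obtain R where R_dist: "\<And>s t. s \<in> T \<Longrightarrow> t \<in> T \<Longrightarrow> (\<Sum>k\<in>T. (R k s - R k t)\<^sup>2) = N s t"
    and R_cols: "\<And>t. t \<in> T \<Longrightarrow> (\<Sum>k\<in>T. R k t) = 0"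
    and R_inv: "\<And>\<pi> s t. bij_betw \<pi> T T \<Longrightarrow> \<forall>s\<in>T. \<forall>t\<in>T. N (\<pi> s) (\<pi> t) = N s t \<Longrightarrow>
      s \<in> T \<Longrightarrow> t \<in> T \<Longrightarrow> R (\<pi> s) (\<pi> t) = R s t"
    using cnd_kernel_euclidean_realisation[OF T, of N] cnd_kernel_snowflake[OF T(1) \<alpha>, of q]
    unfolding N_def symmetric_on_def by (auto simp: dist_commute)
  have N_translate: "\<forall>s\<in>T. \<forall>t\<in>T. N (translate G h s) (translate G h t) = N s t"
    if "h \<in> carrier G" for h
    using iso[OF that] unfolding N_def T_def by simp
  have "R (translate G h s) (translate G h t) = R s t" if "h \<in> carrier G" "s \<in> T" "t \<in> T" for h s t
    by (rule R_inv[OF bij_betw_translate[OF that(1), of n, folded T_def] N_translate[OF that(1)] that(2,3)])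
  with R_dist R_cols show ?thesis unfolding N_def T_def by (rule that)
qed

lemma finite_enumeration:
  assumes "finite X" "card X = n"
  obtains ix and e :: "nat \<Rightarrow> 'x" where "\<And>x. x \<in> X \<Longrightarrow> ix x < n" "\<And>x. x \<in> X \<Longrightarrow> e (ix x) = x"
proof -
  obtain e where e: "bij_betw e {..<n} X"
    using ex_bij_betw_nat_finite[OF assms(1)] assms(2) by (metis atLeast0LessThan)
  show ?thesis
  proof (rule that)
    show "inv_into {..<n} e x < n" "e (inv_into {..<n} e x) = x" if "x \<in> X" for x
      using bij_betwE[OF bij_betw_inv_into[OF e]] bij_betw_inv_into_right[OF e that] that by auto
  qed
qed

lemma Min_image_powr:
  fixes f :: "'a \<Rightarrow> real"
  assumes "finite C" "C \<noteq> {}" "\<forall>h\<in>C. 0 \<le> f h" "0 \<le> \<alpha>"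
  shows "Min ((\<lambda>h. f h powr \<alpha>) ` C) = Min (f ` C) powr \<alpha>"
proof -
  have fin: "finite (f ` C)" "f ` C \<noteq> {}" using assms by auto
  obtain h0 where h0: "h0 \<in> C" "f h0 = Min (f ` C)" using Min_in[OF fin] by auto
  show ?thesis
  proof (rule Min_eqI)
    show "finite ((\<lambda>h. f h powr \<alpha>) ` C)" using assms by simp
    show "Min (f ` C) powr \<alpha> \<in> (\<lambda>h. f h powr \<alpha>) ` C" using h0 by (metis image_eqI)
    fix y assume "y \<in> (\<lambda>h. f h powr \<alpha>) ` C"
    then obtain h where h: "h \<in> C" "y = f h powr \<alpha>" by auto
    have "Min (f ` C) \<le> f h" using fin h by simp
    moreover have "0 \<le> Min (f ` C)" using h0 assms(3) by metis
    ultimately show "Min (f ` C) powr \<alpha> \<le> y" using h assms(4) by (simp add: powr_mono2)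
  qed
qed

theorem quot_dist_snowflake_embeds_in_Q:
  fixes G :: "('g, 'b) monoid_scheme" and \<phi> :: "'g \<Rightarrow> 'v::euclidean_space \<Rightarrow> 'v"
    and p :: "'x \<Rightarrow> 'v"
  assumes grp: "group G" and fin: "finite (carrier G)" and act: "group_action G UNIV \<phi>"
    and iso: "\<forall>g\<in>carrier G. \<forall>x y. dist (\<phi> g x) (\<phi> g y) = dist x y"
    and X: "finite X" "card X = n" and \<alpha>: "0 \<le> \<alpha>" "\<alpha> \<le> 1"
  obtains F where "F ` X \<subseteq> L1 n G"
    and "\<And>x y. x \<in> X \<Longrightarrow> y \<in> X \<Longrightarrow> quot_dist G \<phi> (p x) (p y) powr \<alpha> = Q_dist n G (F x) (F y)"
proof (cases "X = {}")
  case True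
  then show ?thesis using that by blast
next
  case False
  obtain ix and e :: "nat \<Rightarrow> 'x" where ix: "\<And>x. x \<in> X \<Longrightarrow> ix x < n" "\<And>x. x \<in> X \<Longrightarrow> e (ix x) = x"
    by (rule finite_enumeration[OF X]) (rule that)
  interpret G: group G by (rule grp)
  interpret group_action G UNIV \<phi> by (rule act)
  have act_one: "\<phi> \<one>\<^bsub>G\<^esub> v = v" for v
    using id_eq_one by (metis restrict_apply UNIV_I)
  define T where "T = {..<n} \<times> carrier G"
  have "n > 0" using False X by (metis card_gt_0_iff)
  then have T: "finite T" "T \<noteq> {}" unfolding T_def using fin G.one_closed by auto
  define q where "q k = \<phi> (snd k) (p (e (fst k)))" for k :: "nat \<times> 'g"
  have "q (translate G h k) = \<phi> h (q k)" if "h \<in> carrier G" "k \<in> T" for h k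
    using that composition_rule unfolding q_def translate_def T_def by (auto split: prod.split)
  then have q_iso: "dist (q (translate G h s)) (q (translate G h t)) = dist (q s) (q t)"
    if "h \<in> carrier G" "s \<in> {..<n} \<times> carrier G" "t \<in> {..<n} \<times> carrier G" for h s t
    using iso that unfolding T_def by simp
  obtain R where R_dist: "\<And>s t. s \<in> T \<Longrightarrow> t \<in> T \<Longrightarrow>
      (\<Sum>k\<in>T. (R k s - R k t)\<^sup>2) = (dist (q s) (q t) powr \<alpha>)\<^sup>2"
    and R_cols: "\<And>t. t \<in> T \<Longrightarrow> (\<Sum>k\<in>T. R k t) = 0"
    and R_translate: "\<And>h s t. h \<in> carrier G \<Longrightarrow> s \<in> {..<n} \<times> carrier G \<Longrightarrow>
      t \<in> {..<n} \<times> carrier G \<Longrightarrow> R (translate G h s) (translate G h t) = R s t"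
    using G.orbit_snowflake_realisation[OF fin T(2)[unfolded T_def] \<alpha> q_iso] unfolding T_def by blast
  define F where "F x = column_point n G R (ix x, \<one>\<^bsub>G\<^esub>)" for x
  show ?thesis
  proof (rule that)
    show "F ` X \<subseteq> L1 n G"
    proof
      fix z assume "z \<in> F ` X"
      then obtain x where x: "x \<in> X" "z = F x" by blast
      then have "(ix x, \<one>\<^bsub>G\<^esub>) \<in> T" using ix(1) unfolding T_def by simp
      then have "(\<Sum>k\<in>T. R k (ix x, \<one>\<^bsub>G\<^esub>)) = 0" by (rule R_cols)
      then show "z \<in> L1 n G"
        using column_point_in_L1[OF fin] T(2) x unfolding F_def T_def by blast
    qed
  next
    fix x y assume x: "x \<in> X" and y: "y \<in> X"
    have "sqrt (\<Sum>k\<in>T. (R k (ix x, \<one>\<^bsub>G\<^esub>) - R k (ix y, h))\<^sup>2) = dist (p x) (\<phi> h (p y)) powr \<alpha>"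
      if h: "h \<in> carrier G" for h
    proof -
      have "(ix x, \<one>\<^bsub>G\<^esub>) \<in> T" "(ix y, h) \<in> T" using ix x y h unfolding T_def by auto
      moreover have "q (ix x, \<one>\<^bsub>G\<^esub>) = p x" "q (ix y, h) = \<phi> h (p y)"
        using ix x y unfolding q_def by (simp_all add: act_one)
      ultimately show ?thesis using R_dist by simp
    qed
    moreover have "Q_dist n G (F x) (F y)
        = Min ((\<lambda>h. sqrt (\<Sum>k\<in>T. (R k (ix x, \<one>\<^bsub>G\<^esub>) - R k (ix y, h))\<^sup>2)) ` carrier G)"
      unfolding F_def T_def by (rule G.Q_dist_column_point) (use ix(1)[OF y] R_translate in auto)
    ultimately have "Q_dist n G (F x) (F y) = Min ((\<lambda>h. dist (p x) (\<phi> h (p y)) powr \<alpha>) ` carrier G)"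
      by (auto intro!: arg_cong[where f = Min] image_cong)
    also have "\<dots> = quot_dist G \<phi> (p x) (p y) powr \<alpha>"
      unfolding quot_dist_def using fin \<alpha> by (intro Min_image_powr) auto
    finally show "quot_dist G \<phi> (p x) (p y) powr \<alpha> = Q_dist n G (F x) (F y)" by simp
  qed
qed

theorem corollary1:
  fixes X :: "'x set" and d :: "'x \<Rightarrow> 'x \<Rightarrow> real" and n :: nat
    and G :: "('g, 'b) monoid_scheme" and \<phi> :: "'g \<Rightarrow> real^'m \<Rightarrow> real^'m"
  assumes "Metric_space X d"
    and "finite X" and "card X = n"
    and "group G" and "finite (carrier G)"
    and "group_action G UNIV \<phi>"
    and "\<forall>g\<in>carrier G. \<forall>x y. dist (\<phi> g x) (\<phi> g y) = dist x y"
    and "\<exists>F :: 'x \<Rightarrow> real^'m. \<forall>x\<in>X. \<forall>y\<in>X. d x y = quot_dist G \<phi> (F x) (F y)"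
  shows "\<forall>\<alpha>::real. 0 \<le> \<alpha> \<and> \<alpha> \<le> 1 \<longrightarrow>
           (\<exists>F. F ` X \<subseteq> L1 n G \<and>
                (\<forall>x\<in>X. \<forall>y\<in>X. d x y powr \<alpha> = Q_dist n G (F x) (F y)))"
proof (intro allI impI)
  fix \<alpha> :: real assume \<alpha>: "0 \<le> \<alpha> \<and> \<alpha> \<le> 1"
  obtain p :: "'x \<Rightarrow> real^'m" where p: "\<forall>x\<in>X. \<forall>y\<in>X. d x y = quot_dist G \<phi> (p x) (p y)"
    using assms(8) by blast
  obtain F where "F ` X \<subseteq> L1 n G"
    and "\<And>x y. x \<in> X \<Longrightarrow> y \<in> X \<Longrightarrow> quot_dist G \<phi> (p x) (p y) powr \<alpha> = Q_dist n G (F x) (F y)"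
    using quot_dist_snowflake_embeds_in_Q[OF assms(4-7,2,3)] \<alpha> by blast
  then show "\<exists>F. F ` X \<subseteq> L1 n G \<and> (\<forall>x\<in>X. \<forall>y\<in>X. d x y powr \<alpha> = Q_dist n G (F x) (F y))"
    using p by auto
qed

end
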